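(* Let $S_0$ be a classical-quantum program, $\sigma_0$ a classical state and $r\ge 0$ an integer, and let $\mathcal{T}$ be an $r$-fault transition tree starting with $(S_0,\sigma_0)$. Then the map $\mathcal{E}_{\mathcal{T}}:\rho\mapsto \sum_{\langle\downarrow,\sigma,\rho'\rangle\in\mathcal{T}(\rho)}\rho'$ (sum over all leaf nodes of $\mathcal{T}(\rho)$) is well defined (the possibly infinite sum converges) and is a quantum channel, i.e. a completely positive, trace-non-increasing linear map (not necessarily trace-preserving).
   Context: Programs. Fix qubits $q_1,\dots,q_N$. A classical-quantum program (cq-prog) is generated by the grammar $S ::= S_1;S_2 \mid q:=|0\rangle \mid U(\bar q)\mid x:=\mathtt{measure}\ q \mid x:=e \mid \mathtt{if}\ b\ \mathtt{then}\ S_1\ \mathtt{else}\ S_2 \mid y:=f(x) \mid \mathtt{repeat}\ S\ \mathtt{until}\ b$, where $q$ is a qubit, $\bar q$ a list of distinct qubits, $U$ a unitary on $\bar q$, $x,y$ classical variables, $e$ a classical expression, $b$ a Boolean expression and $f$ a classical function. A configuration is a triple $\langle S,\sigma,\rho\rangle$ where $\sigma$ maps classical variables to values, $\rho$ is a partial density operator (positive semidefinite, trace $\le 1$) on the $N$ qubits, and $S$ is a program or the terminated program $\downarrow$ (with $\downarrow;S=S$). For an operator $A$ on qubits $\bar q$, $A_{\bar q}$ denotes $A$ on $\bar q$ tensored with the identity elsewhere, and $|i\rangle_q\langle j|$ denotes $|i\rangle\langle j|$ on qubit $q$. Ideal transitions $\to$: (IN) $\langle q:=|0\rangle,\sigma,\rho\rangle\to\langle\downarrow,\sigma,|0\rangle_q\langle0|\rho|0\rangle_q\langle0|+|0\rangle_q\langle1|\rho|1\rangle_q\langle0|\rangle$;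 (UT) $\langle U(\bar q),\sigma,\rho\rangle\to\langle\downarrow,\sigma,U_{\bar q}\rho U_{\bar q}^\dagger\rangle$; (M0) $\langle x:=\mathtt{measure}\ q,\sigma,\rho\rangle\to\langle\downarrow,\sigma[0/x],|0\rangle_q\langle0|\rho|0\rangle_q\langle0|\rangle$ and (M1) the same with $1$ in place of $0$; (AS) $\langle x:=e,\sigma,\rho\rangle\to\langle\downarrow,\sigma[\sigma(e)/x],\rho\rangle$; (CO) $\langle y:=f(x),\sigma,\rho\rangle\to\langle\downarrow,\sigma[f(\sigma(x))/y],\rho\rangle$; (SC) if $\langle S_1,\sigma,\rho\rangle\to\langle S_1',\sigma',\rho'\rangle$ then $\langle S_1;S_2,\sigma,\rho\rangle\to\langle S_1';S_2,\sigma',\rho'\rangle$; (CT)/(CF) $\langle \mathtt{if}\ b\ \mathtt{then}\ S_1\ \mathtt{else}\ S_2,\sigma,\rho\rangle$ goes to $\langle S_1,\sigma,\rho\rangle$ if $\sigma\models b$ and to $\langle S_2,\sigma,\rho\rangle$ otherwise; (RU) $\langle\mathtt{repeat}\ S\ \mathtt{until}\ b,\sigma,\rho\rangle\to\langle S;\mathtt{if}\ b\ \mathtt{then}\ \downarrow\ \mathtt{else}\ \{\mathtt{repeat}\ S\ \mathtt{until}\ b\},\sigma,\rho\rangle$. Faulty transitions $\leadsto$ (only quantum statements can be faulty; there is also the analogous sequencing rule): (F-IN) $\langle q:=|0\rangle,\sigma,\rho\rangle\leadsto\langle\downarrow,\sigma,\mathcal{E}_q(\rho)\rangle$ and (F-UT)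 $\langle U(\bar q),\sigma,\rho\rangle\leadsto\langle\downarrow,\sigma,\mathcal{E}_{\bar q}(\rho)\rangle$, with $\mathcal{E}_q,\mathcal{E}_{\bar q}$ arbitrary trace-preserving completely positive maps acting nontrivially only on $q$ (resp. $\bar q$); (F-M0)/(F-M1) $\langle x:=\mathtt{measure}\ q,\sigma,\rho\rangle\leadsto\langle\downarrow,\sigma[c/x],\mathcal{E}_{c,q}(\rho)\rangle$ for $c\in\{0,1\}$, with $\mathcal{E}_{c,q}$ arbitrary completely positive maps acting nontrivially only on $q$. Transition trees. For a program $S_0$, classical state $\sigma_0$ and integer $r\ge0$, an $r$-fault transition tree starting with $(S_0,\sigma_0)$ is a (possibly infinite) rooted tree whose nodes are configurations such that: the root is $\langle S_0,\sigma_0,\widetilde\rho\rangle$ with $\widetilde\rho$ an indeterminate quantum state; a node is a leaf iff its program is $\downarrow$; a node whose program begins with a measurement $x:=\mathtt{measure}\ q$ has exactly two children, generated either by (M0) and (M1), or by (F-M0) and (F-M1) with $\mathcal{E}_{0,q}+\mathcal{E}_{1,q}$ trace-preserving; every other non-leaf node has exactly one child obtained by one ideal or faulty transition; every path contains at most $r$ faulty transitions. $\mathcal{T}(\rho_0)$ denotes the tree obtained by substituting the concrete state $\rho_0$ for $\widetilde\rho$. *)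

theory Defs
  imports "HOL-Analysis.Analysis"
begin

text \<open>A (complex) matrix is an entry function; a d x d matrix is one whose entries
  vanish outside the index range below d. Basis state i (i < 2^N) of the N-qubit
  register has qubit k equal to bit k of i.\<close>

type_synonym cmat = "nat \<Rightarrow> nat \<Rightarrow> complex"

definition is_mat :: "nat \<Rightarrow> cmat \<Rightarrow> bool" where
  "is_mat d A \<longleftrightarrow> (\<forall>i j. (d \<le> i \<or> d \<le> j) \<longrightarrow> A i j = 0)"

definition mmul :: "nat \<Rightarrow> cmat \<Rightarrow> cmat \<Rightarrow> cmat" where
  "mmul d A B = (\<lambda>i j. if i < d \<and> j < d then (\<Sum>k<d. A i k * B k j) else 0)"

definition adj :: "cmat \<Rightarrow> cmat" where
  "adj A = (\<lambda>i j. cnj (A j i))"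

definition idm :: "nat \<Rightarrow> cmat" where
  "idm d = (\<lambda>i j. if i = j \<and> i < d then 1 else 0)"

definition unitm :: "nat \<Rightarrow> nat \<Rightarrow> cmat" where
  "unitm i j = (\<lambda>a b. if a = i \<and> b = j then 1 else 0)"

definition mtrace :: "nat \<Rightarrow> cmat \<Rightarrow> complex" where
  "mtrace d A = (\<Sum>i<d. A i i)"

definition psd :: "nat \<Rightarrow> cmat \<Rightarrow> bool" where
  "psd d A \<longleftrightarrow> is_mat d A \<and>
     (\<forall>v :: nat \<Rightarrow> complex. Im (\<Sum>i<d. \<Sum>j<d. cnj (v i) * A i j * v j) = 0
                           \<and> 0 \<le> Re (\<Sum>i<d. \<Sum>j<d. cnj (v i) * A i j * v j))"

definition density :: "nat \<Rightarrow> cmat \<Rightarrow> bool" where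
  "density d \<rho> \<longleftrightarrow> psd d \<rho> \<and> Re (mtrace d \<rho>) \<le> 1"

definition unitary :: "nat \<Rightarrow> cmat \<Rightarrow> bool" where
  "unitary d U \<longleftrightarrow> is_mat d U \<and> mmul d (adj U) U = idm d"

definition linear_on :: "nat \<Rightarrow> (cmat \<Rightarrow> cmat) \<Rightarrow> bool" where
  "linear_on n E \<longleftrightarrow> (\<forall>A B c. is_mat n A \<longrightarrow> is_mat n B \<longrightarrow>
      E (\<lambda>i j. c * A i j + B i j) = (\<lambda>i j. c * E A i j + E B i j))"

text \<open>E \<otimes> id_m for a linear map E on n x n matrices (system index a mod n,
  ancilla index a div n), determined by the action of E on matrix units.\<close>
definition ampl :: "nat \<Rightarrow> nat \<Rightarrow> (cmat \<Rightarrow> cmat) \<Rightarrow> cmat \<Rightarrow> cmat" where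
  "ampl n m E X = (\<lambda>a b. if a < n * m \<and> b < n * m then
     (\<Sum>i<n*m. \<Sum>j<n*m. if i div n = a div n \<and> j div n = b div n
        then X i j * E (unitm (i mod n) (j mod n)) (a mod n) (b mod n) else 0) else 0)"

definition completely_positive :: "nat \<Rightarrow> (cmat \<Rightarrow> cmat) \<Rightarrow> bool" where
  "completely_positive n E \<longleftrightarrow>
     (\<forall>A. is_mat n A \<longrightarrow> is_mat n (E A)) \<and> linear_on n E \<and>
     (\<forall>m X. psd (n * m) X \<longrightarrow> psd (n * m) (ampl n m E X))"

definition trace_preserving :: "nat \<Rightarrow> (cmat \<Rightarrow> cmat) \<Rightarrow> bool" where
  "trace_preserving n E \<longleftrightarrow> (\<forall>A. is_mat n A \<longrightarrow> mtrace n (E A) = mtrace n A)"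

definition trace_nonincreasing :: "nat \<Rightarrow> (cmat \<Rightarrow> cmat) \<Rightarrow> bool" where
  "trace_nonincreasing n E \<longleftrightarrow> (\<forall>\<rho>. psd n \<rho> \<longrightarrow> Re (mtrace n (E \<rho>)) \<le> Re (mtrace n \<rho>))"

definition quantum_channel :: "nat \<Rightarrow> (cmat \<Rightarrow> cmat) \<Rightarrow> bool" where
  "quantum_channel n E \<longleftrightarrow> completely_positive n E \<and> trace_nonincreasing n E"

text \<open>Local index of basis state i w.r.t. the qubit list qs (qs!0 is the least significant bit).\<close>
definition sub_idx :: "nat list \<Rightarrow> nat \<Rightarrow> nat" where
  "sub_idx qs i = (\<Sum>t<length qs. if bit i (qs ! t) then 2 ^ t else 0)"

definition agree_off :: "nat \<Rightarrow> nat list \<Rightarrow> nat \<Rightarrow> nat \<Rightarrow> bool" where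
  "agree_off N qs i j \<longleftrightarrow> (\<forall>k<N. k \<notin> set qs \<longrightarrow> bit i k = bit j k)"

text \<open>A_qs: the operator A on qubits qs tensored with the identity elsewhere.\<close>
definition emb :: "nat \<Rightarrow> nat list \<Rightarrow> cmat \<Rightarrow> cmat" where
  "emb N qs A = (\<lambda>i j. if i < 2^N \<and> j < 2^N \<and> agree_off N qs i j
       then A (sub_idx qs i) (sub_idx qs j) else 0)"

text \<open>E_qs: a superoperator E on qubits qs tensored with the identity channel elsewhere.\<close>
definition lift :: "nat \<Rightarrow> nat list \<Rightarrow> (cmat \<Rightarrow> cmat) \<Rightarrow> cmat \<Rightarrow> cmat" where
  "lift N qs E X = (\<lambda>a b. if a < 2^N \<and> b < 2^N then
     (\<Sum>i<2^N. \<Sum>j<2^N. if agree_off N qs i a \<and> agree_off N qs j b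
        then X i j * E (unitm (sub_idx qs i) (sub_idx qs j)) (sub_idx qs a) (sub_idx qs b)
        else 0) else 0)"

definition local_cp :: "nat \<Rightarrow> nat list \<Rightarrow> (cmat \<Rightarrow> cmat) \<Rightarrow> bool" where
  "local_cp N qs E \<longleftrightarrow> (\<exists>E'. completely_positive (2 ^ length qs) E' \<and> E = lift N qs E')"

definition local_cptp :: "nat \<Rightarrow> nat list \<Rightarrow> (cmat \<Rightarrow> cmat) \<Rightarrow> bool" where
  "local_cptp N qs E \<longleftrightarrow> (\<exists>E'. completely_positive (2 ^ length qs) E'
       \<and> trace_preserving (2 ^ length qs) E' \<and> E = lift N qs E')"

definition sandwich :: "nat \<Rightarrow> cmat \<Rightarrow> cmat \<Rightarrow> cmat" where
  "sandwich N K \<rho> = mmul (2^N) (mmul (2^N) K \<rho>) (adj K)"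

definition madd :: "cmat \<Rightarrow> cmat \<Rightarrow> cmat" where
  "madd A B = (\<lambda>i j. A i j + B i j)"

definition ket_bra :: "nat \<Rightarrow> nat \<Rightarrow> nat \<Rightarrow> nat \<Rightarrow> cmat" where
  "ket_bra N q i j = emb N [q] (unitm i j)"

definition init_map :: "nat \<Rightarrow> nat \<Rightarrow> cmat \<Rightarrow> cmat" where
  "init_map N q \<rho> = madd (sandwich N (ket_bra N q 0 0) \<rho>) (sandwich N (ket_bra N q 0 1) \<rho>)"

definition meas_map :: "nat \<Rightarrow> nat \<Rightarrow> nat \<Rightarrow> cmat \<Rightarrow> cmat" where
  "meas_map N q c \<rho> = sandwich N (ket_bra N q c c) \<rho>"

text \<open>Classical states are maps 'x \<Rightarrow> 'v; expressions, Boolean expressions and classical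
  functions are given semantically. Skip is the terminated program \<down>.\<close>
datatype ('x, 'v) prog =
    Skip
  | Seq "('x, 'v) prog" "('x, 'v) prog"
  | Init nat
  | Unit cmat "nat list"
  | Meas 'x nat
  | Assign 'x "('x \<Rightarrow> 'v) \<Rightarrow> 'v"
  | If "('x \<Rightarrow> 'v) \<Rightarrow> bool" "('x, 'v) prog" "('x, 'v) prog"
  | Fn 'x "'v \<Rightarrow> 'v" 'x
  | Repeat "('x, 'v) prog" "('x \<Rightarrow> 'v) \<Rightarrow> bool"

fun wf_prog :: "nat \<Rightarrow> ('x, 'v) prog \<Rightarrow> bool" where
  "wf_prog N Skip = False"
| "wf_prog N (Seq S1 S2) = (wf_prog N S1 \<and> wf_prog N S2)"
| "wf_prog N (Init q) = (q < N)"
| "wf_prog N (Unit U qs) = (distinct qs \<and> (\<forall>q\<in>set qs. q < N) \<and> unitary (2 ^ length qs) U)"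
| "wf_prog N (Meas x q) = (q < N)"
| "wf_prog N (Assign x e) = True"
| "wf_prog N (If b S1 S2) = (wf_prog N S1 \<and> wf_prog N S2)"
| "wf_prog N (Fn y f x) = True"
| "wf_prog N (Repeat S b) = wf_prog N S"

definition seq :: "('x, 'v) prog \<Rightarrow> ('x, 'v) prog \<Rightarrow> ('x, 'v) prog" where
  "seq S1 S2 = (if S1 = Skip then S2 else Seq S1 S2)"

fun meas_head :: "('x, 'v) prog \<Rightarrow> bool" where
  "meas_head (Meas x q) = True"
| "meas_head (Seq S1 S2) = meas_head S1"
| "meas_head _ = False"

text \<open>Non-measurement transitions (ideal: flag False; faulty: flag True), with the
  quantum map F applied to the quantum state.\<close>
inductive step :: "nat \<Rightarrow> ('x, 'v) prog \<Rightarrow> ('x \<Rightarrow> 'v) \<Rightarrow> bool \<Rightarrow> (cmat \<Rightarrow> cmat)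
    \<Rightarrow> ('x, 'v) prog \<Rightarrow> ('x \<Rightarrow> 'v) \<Rightarrow> bool" for N where
  IN: "step N (Init q) \<sigma> False (init_map N q) Skip \<sigma>"
| UT: "step N (Unit U qs) \<sigma> False (sandwich N (emb N qs U)) Skip \<sigma>"
| AS: "step N (Assign x e) \<sigma> False id Skip (\<sigma>(x := e \<sigma>))"
| CO: "step N (Fn y f x) \<sigma> False id Skip (\<sigma>(y := f (\<sigma> x)))"
| CT: "b \<sigma> \<Longrightarrow> step N (If b S1 S2) \<sigma> False id S1 \<sigma>"
| CF: "\<not> b \<sigma> \<Longrightarrow> step N (If b S1 S2) \<sigma> False id S2 \<sigma>"
| RU: "step N (Repeat S b) \<sigma> False id (Seq S (If b Skip (Repeat S b))) \<sigma>"
| F_IN: "local_cptp N [q] E \<Longrightarrow> step N (Init q) \<sigma> True E Skip \<sigma>"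
| F_UT: "local_cptp N qs E \<Longrightarrow> step N (Unit U qs) \<sigma> True E Skip \<sigma>"
| SC: "step N S1 \<sigma> fl F S1' \<sigma>' \<Longrightarrow> step N (Seq S1 S2) \<sigma> fl F (seq S1' S2) \<sigma>'"

text \<open>Measurement transitions: the pair of transitions producing the two children,
  either (M0),(M1) or (F-M0),(F-M1) with E0 + E1 trace preserving.\<close>
inductive mstep :: "nat \<Rightarrow> ('x, 'v::{zero,one}) prog \<Rightarrow> ('x \<Rightarrow> 'v) \<Rightarrow> bool
    \<Rightarrow> (cmat \<Rightarrow> cmat) \<Rightarrow> ('x, 'v) prog \<Rightarrow> ('x \<Rightarrow> 'v)
    \<Rightarrow> (cmat \<Rightarrow> cmat) \<Rightarrow> ('x, 'v) prog \<Rightarrow> ('x \<Rightarrow> 'v) \<Rightarrow> bool" for N where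
  M: "mstep N (Meas x q) \<sigma> False (meas_map N q 0) Skip (\<sigma>(x := 0))
                                  (meas_map N q 1) Skip (\<sigma>(x := 1))"
| F_M: "local_cp N [q] E0 \<Longrightarrow> local_cp N [q] E1 \<Longrightarrow>
        trace_preserving (2^N) (\<lambda>\<rho>. madd (E0 \<rho>) (E1 \<rho>)) \<Longrightarrow>
        mstep N (Meas x q) \<sigma> True E0 Skip (\<sigma>(x := 0)) E1 Skip (\<sigma>(x := 1))"
| SC: "mstep N S1 \<sigma> fl F0 S0' \<sigma>0 F1 S1' \<sigma>1 \<Longrightarrow>
       mstep N (Seq S1 S2) \<sigma> fl F0 (seq S0' S2) \<sigma>0 F1 (seq S1' S2) \<sigma>1"

text \<open>A (possibly infinite) rooted tree is given by partial labelling of addresses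
  (bool lists; child c of node p is p @ [c]). A node label is (S, \<sigma>, \<Phi>, fl):
  the configuration <S, \<sigma>, \<Phi> \<rho>~> with \<rho>~ indeterminate (\<Phi> is the quantum state as a
  function of the root state), and fl records whether the transition into the node
  was faulty.\<close>
type_synonym ('x, 'v) tree = "bool list \<Rightarrow> (('x, 'v) prog \<times> ('x \<Rightarrow> 'v) \<times> (cmat \<Rightarrow> cmat) \<times> bool) option"

definition faulty_at :: "('x, 'v) tree \<Rightarrow> bool list \<Rightarrow> bool" where
  "faulty_at T p = (case T p of Some (_, _, _, fl) \<Rightarrow> fl | None \<Rightarrow> False)"

definition fault_tree :: "nat \<Rightarrow> nat \<Rightarrow> ('x, 'v::{zero,one}) prog \<Rightarrow> ('x \<Rightarrow> 'v)
    \<Rightarrow> ('x, 'v) tree \<Rightarrow> bool" where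
  "fault_tree N r S0 \<sigma>0 T \<longleftrightarrow>
     T [] = Some (S0, \<sigma>0, id, False) \<and>
     (\<forall>p c. T (p @ [c]) \<noteq> None \<longrightarrow> T p \<noteq> None) \<and>
     (\<forall>p S \<sigma> \<Phi> fl. T p = Some (S, \<sigma>, \<Phi>, fl) \<longrightarrow>
        (S = Skip \<longrightarrow> T (p @ [False]) = None \<and> T (p @ [True]) = None) \<and>
        (meas_head S \<longrightarrow> (\<exists>f F0 S0' \<sigma>0' F1 S1' \<sigma>1'.
            mstep N S \<sigma> f F0 S0' \<sigma>0' F1 S1' \<sigma>1' \<and>
            T (p @ [False]) = Some (S0', \<sigma>0', F0 \<circ> \<Phi>, f) \<and>
            T (p @ [True]) = Some (S1', \<sigma>1', F1 \<circ> \<Phi>, f))) \<and>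
        (S \<noteq> Skip \<and> \<not> meas_head S \<longrightarrow> (\<exists>f F S' \<sigma>'.
            step N S \<sigma> f F S' \<sigma>' \<and>
            T (p @ [False]) = Some (S', \<sigma>', F \<circ> \<Phi>, f) \<and> T (p @ [True]) = None))) \<and>
     (\<forall>p. T p \<noteq> None \<longrightarrow> card {k. 0 < k \<and> k \<le> length p \<and> faulty_at T (take k p)} \<le> r)"

definition leaves :: "('x, 'v) tree \<Rightarrow> bool list set" where
  "leaves T = {p. \<exists>\<sigma> \<Phi> fl. T p = Some (Skip, \<sigma>, \<Phi>, fl)}"

definition node_state :: "('x, 'v) tree \<Rightarrow> bool list \<Rightarrow> cmat \<Rightarrow> cmat" where
  "node_state T p \<rho> = (case T p of Some (_, _, \<Phi>, _) \<Rightarrow> \<Phi> \<rho> | None \<Rightarrow> (\<lambda>_ _. 0))"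

definition tree_map :: "('x, 'v) tree \<Rightarrow> cmat \<Rightarrow> cmat" where
  "tree_map T \<rho> = (\<lambda>i j. \<Sum>\<^sub>\<infinity>p\<in>leaves T. node_state T p \<rho> i j)"

end

(* Each node p of the tree carries the map \<Phi>_p that sends the root state to the node state;
   it is a composite of the maps of the transitions along the path to p and hence completely
   positive.  Non-measurement transitions preserve the trace and the two branches of a
   measurement preserve it jointly, so for every depth n the traces of the nodes at depth n
   plus those of the leaves above depth n add up to tr \<rho>.  Thus the leaf traces of a positive
   \<rho> form a summable family of total at most tr \<rho>; as an entry of a positive matrix is bounded
   by twice its trace, the leaf states are entrywise absolutely summable, and by polarization
   (a matrix unit is a combination of four rank-one projections) so they are for every \<rho>.
   Positivity of E \<otimes> id_J on each finite ancilla J, linearity and the trace bound all pass to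
   the sum. *)

theory Submission
  imports Defs "HOL-Library.Nat_Bijection"
begin

section \<open>Positive semidefinite matrices\<close>

definition quad_form :: "'a set \<Rightarrow> ('a \<Rightarrow> 'a \<Rightarrow> complex) \<Rightarrow> ('a \<Rightarrow> complex) \<Rightarrow> complex" where
  "quad_form A X v = (\<Sum>x\<in>A. \<Sum>y\<in>A. cnj (v x) * X x y * v y)"

definition psd_on :: "'a set \<Rightarrow> ('a \<Rightarrow> 'a \<Rightarrow> complex) \<Rightarrow> bool" where
  "psd_on A X \<longleftrightarrow> (\<forall>v. 0 \<le> quad_form A X v)"

lemma psd_iff_psd_on: "psd d A \<longleftrightarrow> is_mat d A \<and> psd_on {..<d} A"
  by (auto simp: psd_def psd_on_def quad_form_def less_eq_complex_def)

lemma psd_on_cong: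
  "(\<And>x y. x \<in> A \<Longrightarrow> y \<in> A \<Longrightarrow> X x y = Y x y) \<Longrightarrow> psd_on A X \<longleftrightarrow> psd_on A Y"
  unfolding psd_on_def quad_form_def by (simp cong: sum.cong)

lemma quad_form_reindex:
  assumes "bij_betw h A B"
  shows "quad_form A (\<lambda>x y. Z (h x) (h y)) v = quad_form B Z (\<lambda>b. v (inv_into A h b))"
  unfolding quad_form_def sum.reindex_bij_betw[OF assms, symmetric]
  using bij_betw_inv_into_left[OF assms] by (simp cong: sum.cong)

lemma psd_on_reindex:
  assumes "bij_betw h A B" "psd_on B Z" "\<And>x y. x \<in> A \<Longrightarrow> y \<in> A \<Longrightarrow> W x y = Z (h x) (h y)"
  shows "psd_on A W"
  using assms(2) psd_on_cong[of A W "\<lambda>x y. Z (h x) (h y)", OF assms(3)]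
  unfolding psd_on_def quad_form_reindex[OF assms(1)] by simp

lemma psd_on_add: "psd_on A X \<Longrightarrow> psd_on A Y \<Longrightarrow> psd_on A (\<lambda>x y. X x y + Y x y)"
  unfolding psd_on_def quad_form_def
  by (simp add: algebra_simps sum.distrib add_nonneg_nonneg)

lemma sum_swap_outer_pair:
  "(\<Sum>i\<in>A. \<Sum>j\<in>B. \<Sum>k\<in>C. \<Sum>l\<in>D. f i j k l) = (\<Sum>k\<in>C. \<Sum>l\<in>D. \<Sum>i\<in>A. \<Sum>j\<in>B. f i j k l)"
proof -
  have "(\<Sum>i\<in>A. \<Sum>j\<in>B. \<Sum>k\<in>C. \<Sum>l\<in>D. f i j k l) = (\<Sum>i\<in>A. \<Sum>k\<in>C. \<Sum>j\<in>B. \<Sum>l\<in>D. f i j k l)"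
    by (intro sum.cong refl sum.swap)
  also have "\<dots> = (\<Sum>k\<in>C. \<Sum>i\<in>A. \<Sum>l\<in>D. \<Sum>j\<in>B. f i j k l)"
    by (subst sum.swap) (intro sum.cong refl sum.swap)
  also have "\<dots> = (\<Sum>k\<in>C. \<Sum>l\<in>D. \<Sum>i\<in>A. \<Sum>j\<in>B. f i j k l)"
    by (intro sum.cong refl sum.swap)
  finally show ?thesis .
qed

lemma quad_form_congruence:
  assumes "finite A"
  shows "quad_form A (\<lambda>x y. \<Sum>u\<in>A. \<Sum>w\<in>A. M x u * X u w * cnj (M y w)) v
       = quad_form A X (\<lambda>u. \<Sum>x\<in>A. cnj (M x u) * v x)"
proof -
  have "quad_form A (\<lambda>x y. \<Sum>u\<in>A. \<Sum>w\<in>A. M x u * X u w * cnj (M y w)) v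
     = (\<Sum>x\<in>A. \<Sum>y\<in>A. \<Sum>u\<in>A. \<Sum>w\<in>A. cnj (v x) * M x u * X u w * cnj (M y w) * v y)"
    unfolding quad_form_def by (simp add: sum_distrib_left sum_distrib_right mult.assoc)
  also have "\<dots> = (\<Sum>u\<in>A. \<Sum>w\<in>A. \<Sum>x\<in>A. \<Sum>y\<in>A. cnj (v x) * M x u * X u w * cnj (M y w) * v y)"
    by (rule sum_swap_outer_pair)
  also have "\<dots> = quad_form A X (\<lambda>u. \<Sum>x\<in>A. cnj (M x u) * v x)"
    unfolding quad_form_def by (simp add: sum_distrib_left sum_distrib_right mult_ac)
  finally show ?thesis .
qed

lemma psd_on_congruence:
  "finite A \<Longrightarrow> psd_on A X \<Longrightarrow> psd_on A (\<lambda>x y. \<Sum>u\<in>A. \<Sum>w\<in>A. M x u * X u w * cnj (M y w))"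
  unfolding psd_on_def by (simp add: quad_form_congruence)

lemma sum_two_point:
  assumes "(i :: nat) < n" "j < n"
  shows "(\<Sum>y<n. g y * ((if y = i then 1 else 0) + c * (if y = j then 1 else 0))) = g i + c * (g j :: complex)"
proof -
  have "(\<Sum>y<n. g y * ((if y = i then 1 else 0) + c * (if y = j then 1 else 0)))
      = (\<Sum>y<n. g y * (if y = i then 1 else 0)) + c * (\<Sum>y<n. g y * (if y = j then 1 else 0))"
    by (simp add: distrib_left sum.distrib sum_distrib_left mult_ac)
  then show ?thesis
    using assms by (simp add: if_distrib[where f = "\<lambda>x. _ * x"] cong: if_cong)
qed

lemma quad_form_two_point:
  assumes "(i :: nat) < n" "j < n"
  shows "quad_form {..<n} A (\<lambda>x. (if x = i then 1 else 0) + c * (if x = j then 1 else 0))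
       = A i i + c * A i j + cnj c * (A j i + c * A j j)"
proof -
  let ?v = "\<lambda>x. (if x = i then 1 else 0) + c * (if x = j then 1 else 0)"
  have "quad_form {..<n} A ?v = (\<Sum>x<n. (A x i + c * A x j) * cnj (?v x))"
    unfolding quad_form_def
    by (intro sum.cong refl)
      (simp add: sum_two_point[OF assms, of "\<lambda>y. A _ y", symmetric] sum_distrib_left mult_ac)
  also have "\<dots> = (\<Sum>x<n. (A x i + c * A x j)
      * ((if x = i then 1 else 0) + cnj c * (if x = j then 1 else 0)))"
    by (intro sum.cong refl) (simp add: if_distrib[where f = cnj] cong: if_cong)
  also have "\<dots> = A i i + c * A i j + cnj c * (A j i + c * A j j)"
    by (rule sum_two_point[OF assms])
  finally show ?thesis .
qed

lemma psd_diag_nonneg: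
  assumes "psd n A" "k < n"
  shows "0 \<le> A k k"
proof -
  have "0 \<le> quad_form {..<n} A (\<lambda>x. (if x = k then 1 else 0) + 0 * (if x = k then 1 else 0))"
    using assms(1) by (simp add: psd_iff_psd_on psd_on_def)
  then show ?thesis using quad_form_two_point[OF assms(2) assms(2), of A 0] by simp
qed

lemma psd_trace_nonneg: "psd n A \<Longrightarrow> 0 \<le> Re (mtrace n A)"
  unfolding mtrace_def using psd_diag_nonneg by (auto simp: less_eq_complex_def intro!: sum_nonneg)

lemma norm_polarization_le: "cmod (a - b - \<i> * c + \<i> * d) \<le> cmod a + cmod b + cmod c + cmod d"
proof -
  have "cmod (a - b - \<i> * c + \<i> * d) \<le> cmod (a - b - \<i> * c) + cmod (\<i> * d)"
    by (rule norm_triangle_ineq)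
  moreover have "cmod (a - b - \<i> * c) \<le> cmod (a - b) + cmod (\<i> * c)"
    by (rule norm_triangle_ineq4)
  moreover have "cmod (a - b) \<le> cmod a + cmod b" by (rule norm_triangle_ineq4)
  ultimately show ?thesis by (simp add: norm_mult)
qed

lemma psd_norm_entry_le_trace:
  assumes A: "psd n A"
  shows "cmod (A i j) \<le> 2 * Re (mtrace n A)"
proof (cases "i < n \<and> j < n")
  case False
  then have "A i j = 0" using A by (auto simp: psd_def is_mat_def)
  then show ?thesis using psd_trace_nonneg[OF A] by simp
next
  case True
  then have i: "i < n" and j: "j < n" by auto
  define q where "q c = A i i + c * A i j + cnj c * (A j i + c * A j j)" for c
  have "0 \<le> q c" for c
    using A unfolding q_def quad_form_two_point[OF i j, symmetric] psd_iff_psd_on psd_on_def by blast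
  then have norm_q: "cmod (q c) = Re (q c)" for c by (simp add: cmod_eq_Re less_eq_complex_def)
  have diag: "Re (A k k) \<le> Re (mtrace n A)" if "k < n" for k
    unfolding mtrace_def Re_sum using psd_diag_nonneg[OF A] that
    by (intro member_le_sum) (auto simp: less_eq_complex_def)
  have polar: "A i j = (q 1 - q (-1) - \<i> * q \<i> + \<i> * q (-\<i>)) / 4"
    by (simp add: q_def field_simps)
  have "cmod (A i j) = cmod (q 1 - q (-1) - \<i> * q \<i> + \<i> * q (-\<i>)) / 4"
    by (subst polar, subst norm_divide) simp
  also have "\<dots> \<le> (cmod (q 1) + cmod (q (-1)) + cmod (q \<i>) + cmod (q (-\<i>))) / 4"
    using norm_polarization_le by (simp add: divide_right_mono)
  also have "\<dots> = (Re (q 1) + Re (q (-1)) + Re (q \<i>) + Re (q (-\<i>))) / 4"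
    by (simp only: norm_q)
  also have "\<dots> = Re (A i i) + Re (A j j)"
    by (simp add: q_def algebra_simps)
  also have "\<dots> \<le> 2 * Re (mtrace n A)"
    using diag[OF i] diag[OF j] by simp
  finally show ?thesis .
qed

definition outer_product :: "nat \<Rightarrow> (nat \<Rightarrow> complex) \<Rightarrow> cmat" where
  "outer_product n w = (\<lambda>a b. if a < n \<and> b < n then w a * cnj (w b) else 0)"

lemma psd_outer_product: "psd n (outer_product n w)"
proof -
  have "0 \<le> quad_form {..<n} (outer_product n w) v" for v
  proof -
    define s where "s = (\<Sum>b<n. cnj (w b) * v b)"
    have "quad_form {..<n} (outer_product n w) v = cnj s * s"
      unfolding quad_form_def outer_product_def s_def
      by (simp add: sum_distrib_left sum_distrib_right mult_ac)
    also have "\<dots> = of_real ((cmod s)\<^sup>2)" by (simp only: complex_norm_square mult.commute)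
    finally show ?thesis by (simp add: less_eq_complex_def)
  qed
  then show ?thesis
    by (simp add: psd_iff_psd_on psd_on_def is_mat_def outer_product_def)
qed

lemma unitm_polarization:
  assumes "k < n" "l < n"
  shows "unitm k l = (\<lambda>a b. \<Sum>t<4. (\<i> ^ t / 4) *
    outer_product n (\<lambda>x. (if x = k then 1 else 0) + \<i> ^ t * (if x = l then 1 else 0)) a b)"
  using assms
  by (auto simp: fun_eq_iff unitm_def outer_product_def eval_nat_numeral field_simps)

section \<open>Complete positivity with finite ancillas\<close>

text \<open>\<open>ampl_prod n E\<close> is \<open>E \<otimes> id\<close> acting on matrices indexed by pairs (system index, ancilla
  index); the map \<open>ampl n m E\<close> of the definition of complete positivity is the same map with the
  pair \<open>(i, c)\<close> flattened to \<open>i + n * c\<close>.\<close>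

definition ampl_prod :: "nat \<Rightarrow> (cmat \<Rightarrow> cmat) \<Rightarrow> (nat \<times> 'j \<Rightarrow> nat \<times> 'j \<Rightarrow> complex)
    \<Rightarrow> nat \<times> 'j \<Rightarrow> nat \<times> 'j \<Rightarrow> complex" where
  "ampl_prod n E X = (\<lambda>x y. \<Sum>i<n. \<Sum>j<n. X (i, snd x) (j, snd y) * E (unitm i j) (fst x) (fst y))"

definition cp_prod :: "nat \<Rightarrow> (cmat \<Rightarrow> cmat) \<Rightarrow> bool" where
  "cp_prod n E \<longleftrightarrow>
     (\<forall>m :: nat. \<forall>X. psd_on ({..<n} \<times> {..<m}) X \<longrightarrow> psd_on ({..<n} \<times> {..<m}) (ampl_prod n E X))"

lemma cp_prodI:
  "(\<And>J :: nat set. \<And>X. finite J \<Longrightarrow> psd_on ({..<n} \<times> J) X \<Longrightarrow> psd_on ({..<n} \<times> J) (ampl_prod n E X))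
    \<Longrightarrow> cp_prod n E"
  unfolding cp_prod_def by simp

lemma cp_prod_ancilla:
  assumes "cp_prod n E" "finite (J :: 'j set)" "psd_on ({..<n} \<times> J) X"
  shows "psd_on ({..<n} \<times> J) (ampl_prod n E X)"
proof -
  obtain h where h: "bij_betw h J {..<card J}"
    using ex_bij_betw_finite_nat[OF assms(2)] by (auto simp: atLeast0LessThan)
  define g where "g = inv_into J h"
  have g: "bij_betw g {..<card J} J" and gh: "\<And>j. j \<in> J \<Longrightarrow> g (h j) = j"
    using h bij_betw_inv_into bij_betw_inv_into_left unfolding g_def by metis+
  define X' where "X' = (\<lambda>x y. X (map_prod id g x) (map_prod id g y))"
  have "psd_on ({..<n} \<times> {..<card J}) X'"
    using psd_on_reindex[OF bij_betw_map_prod[OF bij_betw_id g] assms(3)] by (simp add: X'_def)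
  then have "psd_on ({..<n} \<times> {..<card J}) (ampl_prod n E X')"
    using assms(1) unfolding cp_prod_def by blast
  then show ?thesis
    by (rule psd_on_reindex[OF bij_betw_map_prod[OF bij_betw_id h]])
       (auto simp: ampl_prod_def X'_def gh)
qed

lemma pair_index_bij:
  fixes n m :: nat
  assumes "0 < n"
  shows "bij_betw (\<lambda>(k, l). k + n * l) ({..<n} \<times> {..<m}) {..<n * m}"
    and "bij_betw (\<lambda>a. (a mod n, a div n)) {..<n * m} ({..<n} \<times> {..<m})"
proof -
  have lt: "k + n * l < n * m" if "k < n" "l < m" for k l
  proof -
    have "k + n * l < n * Suc l" using that by simp
    also have "\<dots> \<le> n * m" using that by (intro mult_le_mono2) simp
    finally show ?thesis .
  qed
  have dv: "a div n < m" if "a < n * m" for a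
    using that by (simp add: less_mult_imp_div_less mult.commute)
  show "bij_betw (\<lambda>(k, l). k + n * l) ({..<n} \<times> {..<m}) {..<n * m}"
    by (rule bij_betw_byWitness[where f'="\<lambda>a. (a mod n, a div n)"]) (use assms lt dv in auto)
  show "bij_betw (\<lambda>a. (a mod n, a div n)) {..<n * m} ({..<n} \<times> {..<m})"
    by (rule bij_betw_byWitness[where f'="\<lambda>(k, l). k + n * l"]) (use assms lt dv in auto)
qed

lemma ampl_pair_index:
  fixes n m a b c d :: nat
  assumes "0 < n" "a < n" "b < n" "c < m" "d < m"
  shows "ampl n m E X (a + n * c) (b + n * d)
       = ampl_prod n E (\<lambda>x y. X (fst x + n * snd x) (fst y + n * snd y)) (a, c) (b, d)"
proof -
  have restrict: "(\<Sum>i<n * m. if i div n = c then f i else 0) = (\<Sum>k<n. f (k + n * c))"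
    if "c < m" for f :: "nat \<Rightarrow> complex" and c
  proof -
    have "(\<Sum>i<n * m. if i div n = c then f i else 0)
        = (\<Sum>(k, l)\<in>{..<n} \<times> {..<m}. if l = c then f (k + n * l) else 0)"
      using assms(1) by (subst sum.reindex_bij_betw[OF pair_index_bij(1)[OF assms(1)], symmetric])
        (auto intro!: sum.cong)
    also have "\<dots> = (\<Sum>k<n. f (k + n * c))"
      using that by (simp add: sum.cartesian_product[symmetric])
    finally show ?thesis .
  qed
  have "a + n * c < n * m" "b + n * d < n * m"
    using bij_betw_apply[OF pair_index_bij(1)[OF assms(1)], of "(a, c)"]
      bij_betw_apply[OF pair_index_bij(1)[OF assms(1)], of "(b, d)"] assms by auto
  then have "ampl n m E X (a + n * c) (b + n * d)
     = (\<Sum>i<n * m. if i div n = c then (\<Sum>j<n * m. if j div n = d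
          then X i j * E (unitm (i mod n) (j mod n)) a b else 0) else 0)"
    using assms unfolding ampl_def by (auto intro!: sum.cong)
  also have "\<dots> = (\<Sum>k<n. \<Sum>l<n. X (k + n * c) (l + n * d) * E (unitm k l) a b)"
    using assms by (simp add: restrict)
  finally show ?thesis by (simp add: ampl_prod_def)
qed

lemma cp_prod_imp_ampl_psd:
  assumes n: "0 < n" and E: "cp_prod n E" and X: "psd (n * m) X"
  shows "psd (n * m) (ampl n m E X)"
proof -
  define X' where "X' = (\<lambda>x y. X (fst x + n * snd x) (fst y + n * snd y))"
  have "psd_on ({..<n} \<times> {..<m}) X'"
    using X by (intro psd_on_reindex[OF pair_index_bij(1)[OF n]]) (auto simp: psd_iff_psd_on X'_def)
  then have "psd_on ({..<n} \<times> {..<m}) (ampl_prod n E X')"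
    using E unfolding cp_prod_def by blast
  then have "psd_on {..<n * m} (ampl n m E X)"
  proof (rule psd_on_reindex[OF pair_index_bij(2)[OF n]])
    fix x y assume "x \<in> {..<n * m}" "y \<in> {..<n * m}"
    then have "x div n < m" "y div n < m" by (simp_all add: less_mult_imp_div_less mult.commute)
    then show "ampl n m E X x y = ampl_prod n E X' (x mod n, x div n) (y mod n, y div n)"
      using ampl_pair_index[OF n, of "x mod n" "y mod n" "x div n" m "y div n" E X] n
      by (simp add: X'_def)
  qed
  moreover have "is_mat (n * m) (ampl n m E X)" unfolding is_mat_def ampl_def by auto
  ultimately show ?thesis by (simp add: psd_iff_psd_on)
qed

lemma ampl_psd_imp_cp_prod:
  assumes n: "0 < n" and E: "\<And>m X. psd (n * m) X \<Longrightarrow> psd (n * m) (ampl n m E X)"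
  shows "cp_prod n E"
  unfolding cp_prod_def
proof (intro allI impI)
  fix m :: nat and X assume X: "psd_on ({..<n} \<times> {..<m}) X"
  define Xm where "Xm = (\<lambda>a b. if a < n * m \<and> b < n * m
     then X (a mod n, a div n) (b mod n, b div n) else 0)"
  have "psd_on {..<n * m} Xm"
    by (rule psd_on_reindex[OF pair_index_bij(2)[OF n] X]) (simp add: Xm_def)
  moreover have "is_mat (n * m) Xm" unfolding is_mat_def Xm_def by auto
  ultimately have "psd_on {..<n * m} (ampl n m E Xm)"
    using E by (simp add: psd_iff_psd_on)
  then show "psd_on ({..<n} \<times> {..<m}) (ampl_prod n E X)"
  proof (rule psd_on_reindex[OF pair_index_bij(1)[OF n]])
    fix x y assume "x \<in> {..<n} \<times> {..<m}" "y \<in> {..<n} \<times> {..<m}"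
    moreover have "Xm (k + n * c) (l + n * d) = X (k, c) (l, d)"
      if "k < n" "l < n" "c < m" "d < m" for k l c d
      using that n bij_betw_apply[OF pair_index_bij(1)[OF n], of "(k, c)" m]
        bij_betw_apply[OF pair_index_bij(1)[OF n], of "(l, d)" m]
      by (simp add: Xm_def)
    ultimately show "ampl_prod n E X x y = ampl n m E Xm ((\<lambda>(k, l). k + n * l) x) ((\<lambda>(k, l). k + n * l) y)"
      using n by (auto simp: ampl_pair_index ampl_prod_def)
  qed
qed

lemma completely_positive_iff_cp_prod:
  assumes "0 < n"
  shows "completely_positive n E \<longleftrightarrow>
           (\<forall>A. is_mat n A \<longrightarrow> is_mat n (E A)) \<and> linear_on n E \<and> cp_prod n E"
  using cp_prod_imp_ampl_psd[OF assms] ampl_psd_imp_cp_prod[OF assms]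
  unfolding completely_positive_def by blast

lemma is_mat_unitm: "i < n \<Longrightarrow> j < n \<Longrightarrow> is_mat n (unitm i j)"
  unfolding is_mat_def unitm_def by auto

lemma matrix_unit_expansion:
  assumes "is_mat n A"
  shows "A = (\<lambda>i j. \<Sum>(k, l)\<in>{..<n} \<times> {..<n}. A k l * unitm k l i j)"
proof (intro ext)
  fix i j
  have "(\<Sum>(k, l)\<in>{..<n} \<times> {..<n}. A k l * unitm k l i j)
      = (\<Sum>z\<in>{..<n} \<times> {..<n}. if z = (i, j) then A i j else 0)"
    by (intro sum.cong) (auto simp: unitm_def split: if_splits)
  also have "\<dots> = A i j"
    using assms by (auto simp: is_mat_def)
  finally show "A i j = (\<Sum>(k, l)\<in>{..<n} \<times> {..<n}. A k l * unitm k l i j)" ..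
qed

lemma linear_on_sum:
  assumes E: "linear_on n E" and S: "finite S" and M: "\<And>x. x \<in> S \<Longrightarrow> is_mat n (M x)"
  shows "E (\<lambda>i j. \<Sum>x\<in>S. c x * M x i j) = (\<lambda>i j. \<Sum>x\<in>S. c x * E (M x) i j)"
  using S M
proof (induction S rule: finite_induct)
  case empty
  have "is_mat n (\<lambda>_ _. 0)" by (simp add: is_mat_def)
  then have "E (\<lambda>i j. 1 * 0 + 0) = (\<lambda>i j. 1 * E (\<lambda>_ _. 0) i j + E (\<lambda>_ _. 0) i j)"
    using E unfolding linear_on_def by blast
  then show ?case by (simp add: fun_eq_iff)
next
  case (insert x S)
  have "is_mat n (\<lambda>i j. \<Sum>y\<in>S. c y * M y i j)"
    using insert.prems by (auto simp: is_mat_def intro!: sum.neutral)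
  then have "E (\<lambda>i j. c x * M x i j + (\<Sum>y\<in>S. c y * M y i j))
           = (\<lambda>i j. c x * E (M x) i j + E (\<lambda>i j. \<Sum>y\<in>S. c y * M y i j) i j)"
    using E insert.prems unfolding linear_on_def by blast
  then show ?case using insert by simp
qed

lemma linear_on_expand:
  assumes "linear_on n E" "is_mat n A"
  shows "E A a b = (\<Sum>k<n. \<Sum>l<n. A k l * E (unitm k l) a b)"
proof -
  have "E A = (\<lambda>a b. \<Sum>(k, l)\<in>{..<n} \<times> {..<n}. A k l * E (unitm k l) a b)"
    using linear_on_sum[OF assms(1), of "{..<n} \<times> {..<n}" "\<lambda>(k, l). unitm k l" "\<lambda>(k, l). A k l"]
      matrix_unit_expansion[OF assms(2)]
    by (auto simp: is_mat_unitm case_prod_beta')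
  then show ?thesis by (simp add: sum.cartesian_product)
qed

lemma ampl_prod_comp:
  assumes "linear_on n F" "\<And>i j. i < n \<Longrightarrow> j < n \<Longrightarrow> is_mat n (G (unitm i j))"
  shows "ampl_prod n (F \<circ> G) X = ampl_prod n F (ampl_prod n G X)"
proof (intro ext)
  fix x y
  have "ampl_prod n (F \<circ> G) X x y = (\<Sum>i<n. \<Sum>j<n. X (i, snd x) (j, snd y) *
          (\<Sum>k<n. \<Sum>l<n. G (unitm i j) k l * F (unitm k l) (fst x) (fst y)))"
    unfolding ampl_prod_def o_def using linear_on_expand[OF assms(1) assms(2)]
    by (intro sum.cong refl) simp
  also have "\<dots> = (\<Sum>i<n. \<Sum>j<n. \<Sum>k<n. \<Sum>l<n.
          X (i, snd x) (j, snd y) * G (unitm i j) k l * F (unitm k l) (fst x) (fst y))"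
    by (simp add: sum_distrib_left mult.assoc)
  also have "\<dots> = (\<Sum>k<n. \<Sum>l<n. \<Sum>i<n. \<Sum>j<n.
          X (i, snd x) (j, snd y) * G (unitm i j) k l * F (unitm k l) (fst x) (fst y))"
    by (rule sum_swap_outer_pair)
  also have "\<dots> = ampl_prod n F (ampl_prod n G X) x y"
    unfolding ampl_prod_def by (simp add: sum_distrib_right)
  finally show "ampl_prod n (F \<circ> G) X x y = ampl_prod n F (ampl_prod n G X) x y" .
qed

lemma completely_positive_comp:
  assumes n: "0 < n" and F: "completely_positive n F" and G: "completely_positive n G"
  shows "completely_positive n (F \<circ> G)"
proof -
  have Gmat: "\<And>A. is_mat n A \<Longrightarrow> is_mat n (G A)" and Fmat: "\<And>A. is_mat n A \<Longrightarrow> is_mat n (F A)"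
    and "linear_on n F" "linear_on n G" "cp_prod n F" "cp_prod n G"
    using F G by (simp_all add: completely_positive_iff_cp_prod[OF n])
  moreover from this have "linear_on n (F \<circ> G)"
    unfolding linear_on_def by (simp add: Gmat)
  moreover from calculation have "cp_prod n (F \<circ> G)"
    unfolding cp_prod_def by (simp add: ampl_prod_comp Gmat is_mat_unitm)
  ultimately show ?thesis by (simp add: completely_positive_iff_cp_prod[OF n])
qed

lemma completely_positive_add:
  assumes n: "0 < n" and F: "completely_positive n F" and G: "completely_positive n G"
  shows "completely_positive n (\<lambda>\<rho>. madd (F \<rho>) (G \<rho>))"
proof -
  have ampl_add: "ampl_prod n (\<lambda>\<rho>. madd (F \<rho>) (G \<rho>)) X
      = (\<lambda>x y. ampl_prod n F X x y + ampl_prod n G X x y)" for X :: "nat \<times> nat \<Rightarrow> _"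
    unfolding ampl_prod_def madd_def by (simp add: algebra_simps sum.distrib)
  have "cp_prod n (\<lambda>\<rho>. madd (F \<rho>) (G \<rho>))"
    using F G unfolding completely_positive_iff_cp_prod[OF n] cp_prod_def ampl_add
    by (blast intro: psd_on_add)
  moreover have "linear_on n (\<lambda>\<rho>. madd (F \<rho>) (G \<rho>))"
    using F G unfolding completely_positive_def linear_on_def madd_def
    by (simp add: algebra_simps)
  moreover have "is_mat n (madd (F A) (G A))" if "is_mat n A" for A
    using F G that unfolding completely_positive_def is_mat_def madd_def by simp
  ultimately show ?thesis by (simp add: completely_positive_iff_cp_prod[OF n])
qed

lemma completely_positive_id:
  assumes n: "0 < n"
  shows "completely_positive n id"
proof -
  have ampl_id: "ampl_prod n id X x y = X x y"
    if "fst x < n" "fst y < n" for x y :: "nat \<times> 'j" and X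
  proof -
    have "ampl_prod n id X x y
        = (\<Sum>i<n. \<Sum>j<n. if j = fst y then (if i = fst x then X x y else 0) else 0)"
      unfolding ampl_prod_def by (intro sum.cong refl) (auto simp: unitm_def)
    then show ?thesis using that by simp
  qed
  have "psd_on ({..<n} \<times> J) (ampl_prod n id X) \<longleftrightarrow> psd_on ({..<n} \<times> J) X" for J X
    by (intro psd_on_cong) (auto simp: ampl_id)
  then have "cp_prod n id"
    unfolding cp_prod_def by blast
  then show ?thesis
    by (simp add: completely_positive_iff_cp_prod[OF n] linear_on_def)
qed

lemma completely_positive_zero:
  assumes n: "0 < n"
  shows "completely_positive n (\<lambda>_ _ _. 0)"
  unfolding completely_positive_iff_cp_prod[OF n] cp_prod_def linear_on_def
  by (simp add: ampl_prod_def psd_on_def quad_form_def is_mat_def)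

lemma completely_positive_psd:
  assumes n: "0 < n" and E: "completely_positive n E" and \<rho>: "psd n \<rho>"
  shows "psd n (E \<rho>)"
proof -
  have lin: "linear_on n E" and "cp_prod n E" and mat: "is_mat n (E \<rho>)"
    using E \<rho> by (auto simp: completely_positive_iff_cp_prod[OF n] psd_def)
  have "psd_on ({..<n} \<times> {0 :: nat}) (\<lambda>x y. \<rho> (fst x) (fst y))"
  proof (rule psd_on_reindex)
    show "bij_betw fst ({..<n} \<times> {0 :: nat}) {..<n}"
      by (rule bij_betw_byWitness[where f'="\<lambda>a. (a, 0)"]) auto
  qed (use \<rho> in \<open>auto simp: psd_iff_psd_on\<close>)
  then have ampl: "psd_on ({..<n} \<times> {0 :: nat}) (ampl_prod n E (\<lambda>x y. \<rho> (fst x) (fst y)))"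
    using \<open>cp_prod n E\<close> by (intro cp_prod_ancilla) simp_all
  have "psd_on {..<n} (E \<rho>)"
  proof (rule psd_on_reindex[OF _ ampl])
    show "bij_betw (\<lambda>a. (a, 0)) {..<n} ({..<n} \<times> {0 :: nat})"
      by (rule bij_betw_byWitness[where f'=fst]) auto
  qed (use \<rho> in \<open>auto simp: ampl_prod_def linear_on_expand[OF lin] psd_def\<close>)
  with mat show ?thesis by (simp add: psd_iff_psd_on)
qed

section \<open>Maps acting on a list of qubits\<close>

lemma bit_iff_mem_set_decode: "bit (i :: nat) x \<longleftrightarrow> x \<in> set_decode i"
  by (simp add: set_decode_def bit_iff_odd)

lemma bit_sub_idx: "bit (sub_idx qs i) t \<longleftrightarrow> t < length qs \<and> bit i (qs ! t)"
proof -
  have "sub_idx qs i = set_encode {t. t < length qs \<and> bit i (qs ! t)}"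
    unfolding sub_idx_def set_encode_def
    by (subst sum.inter_filter[symmetric]) (simp_all add: Collect_conj_eq lessThan_def Int_commute)
  then show ?thesis by (simp add: bit_iff_mem_set_decode)
qed

lemma sub_idx_less: "sub_idx qs i < 2 ^ length qs"
proof -
  have geometric: "(\<Sum>t<k. (2 :: nat) ^ t) = 2 ^ k - 1" for k
    by (induction k) auto
  have "sub_idx qs i \<le> (\<Sum>t<length qs. (2 :: nat) ^ t)"
    unfolding sub_idx_def by (intro sum_mono) auto
  also have "\<dots> < 2 ^ length qs" by (simp add: geometric)
  finally show ?thesis .
qed

lemma set_decode_less_two_power:
  assumes "(i :: nat) < 2 ^ N"
  shows "set_decode i \<subseteq> {..<N}"
proof
  fix x assume "x \<in> set_decode i"
  then have "i div 2 ^ x \<noteq> 0" by (auto simp: set_decode_def dest: odd_pos)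
  then have "(2 :: nat) ^ x \<le> i" by (simp add: div_greater_zero_iff)
  with assms have "(2 :: nat) ^ x < 2 ^ N" by linarith
  then show "x \<in> {..<N}" using power_less_imp_less_exp[of "2 :: nat" x N] by simp
qed

lemma agree_off_iff:
  assumes "i < 2 ^ N" "j < 2 ^ N"
  shows "agree_off N qs i j \<longleftrightarrow> set_decode i - set qs = set_decode j - set qs"
  using set_decode_less_two_power[OF assms(1)] set_decode_less_two_power[OF assms(2)]
  unfolding agree_off_def bit_iff_mem_set_decode by blast

definition split_index :: "nat list \<Rightarrow> nat \<Rightarrow> nat \<times> nat set" where
  "split_index qs i = (sub_idx qs i, set_decode i - set qs)"

definition join_index :: "nat \<Rightarrow> nat list \<Rightarrow> nat \<times> nat set \<Rightarrow> nat" where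
  "join_index N qs = inv_into {..<2 ^ N} (split_index qs)"

lemma inj_split_index: "inj (split_index qs)"
proof (rule injI)
  fix i j assume eq: "split_index qs i = split_index qs j"
  have "x \<in> set_decode i \<longleftrightarrow> x \<in> set_decode j" for x
  proof (cases "x \<in> set qs")
    case True
    then obtain t where "t < length qs" "x = qs ! t" by (auto simp: in_set_conv_nth)
    then show ?thesis
      using eq bit_sub_idx[of qs i t] bit_sub_idx[of qs j t]
      by (simp add: split_index_def bit_iff_mem_set_decode)
  next
    case False
    then show ?thesis using eq by (auto simp: split_index_def)
  qed
  then show "i = j" by (metis set_eqI set_decode_inverse)
qed

lemma split_index_bij:
  assumes "distinct qs" "set qs \<subseteq> {..<N}"
  shows "bij_betw (split_index qs) {..<2 ^ N} ({..<2 ^ length qs} \<times> Pow ({..<N} - set qs))"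
proof -
  have sub: "split_index qs ` {..<2 ^ N} \<subseteq> {..<2 ^ length qs} \<times> Pow ({..<N} - set qs)"
    using sub_idx_less set_decode_less_two_power by (fastforce simp: split_index_def)
  have "length qs \<le> N" using assms card_mono[OF _ assms(2)] distinct_card by fastforce
  then have "card ({..<(2 :: nat) ^ length qs} \<times> Pow ({..<N} - set qs)) = 2 ^ N"
    using assms card_Diff_subset[OF _ assms(2)] distinct_card[OF assms(1)]
    by (simp add: card_cartesian_product card_Pow power_add[symmetric])
  also have "\<dots> = card (split_index qs ` {..<2 ^ N})"
    using card_image[OF inj_on_subset[OF inj_split_index]] by simp
  finally show ?thesis
    using card_subset_eq[OF _ sub] inj_on_subset[OF inj_split_index] by (simp add: bij_betw_def)
qed

lemma
  assumes "distinct qs" "set qs \<subseteq> {..<N}"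
  shows join_index_bij:
      "bij_betw (join_index N qs) ({..<2 ^ length qs} \<times> Pow ({..<N} - set qs)) {..<2 ^ N}"
    and split_join_index:
      "z \<in> {..<2 ^ length qs} \<times> Pow ({..<N} - set qs) \<Longrightarrow> split_index qs (join_index N qs z) = z"
    and join_split_index: "a < 2 ^ N \<Longrightarrow> join_index N qs (split_index qs a) = a"
  using bij_betw_inv_into[OF split_index_bij[OF assms]]
    bij_betw_inv_into_right[OF split_index_bij[OF assms]]
    bij_betw_inv_into_left[OF split_index_bij[OF assms]]
  unfolding join_index_def by auto

lemma sum_agree_off:
  assumes qs: "distinct qs" "set qs \<subseteq> {..<N}" and a: "a < 2 ^ N"
  shows "(\<Sum>i<2 ^ N. if agree_off N qs i a then f (sub_idx qs i) i else 0)
       = (\<Sum>u<2 ^ length qs. f u (join_index N qs (u, snd (split_index qs a))))"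
proof -
  let ?S = "{..<(2 :: nat) ^ length qs}" and ?P = "Pow ({..<N} - set qs)" and ?j = "join_index N qs"
  have "(\<Sum>i<2 ^ N. if agree_off N qs i a then f (sub_idx qs i) i else 0)
      = (\<Sum>z\<in>?S \<times> ?P.
           if agree_off N qs (?j z) a then f (sub_idx qs (?j z)) (?j z) else 0)"
    by (rule sum.reindex_bij_betw[OF join_index_bij[OF qs], symmetric])
  also have "\<dots> = (\<Sum>z\<in>?S \<times> ?P.
           if snd z = snd (split_index qs a) then f (fst z) (?j z) else 0)"
  proof (rule sum.cong[OF refl])
    fix z assume z: "z \<in> ?S \<times> ?P"
    have "?j z < 2 ^ N" using bij_betw_apply[OF join_index_bij[OF qs] z] by simp
    then show "(if agree_off N qs (?j z) a then f (sub_idx qs (?j z)) (?j z) else 0)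
        = (if snd z = snd (split_index qs a) then f (fst z) (?j z) else 0)"
      using split_join_index[OF qs z] agree_off_iff[OF _ a, of _ qs]
      by (auto simp: split_index_def prod_eq_iff)
  qed
  also have "\<dots> = (\<Sum>u\<in>?S. \<Sum>R\<in>?P. if R = snd (split_index qs a) then f u (?j (u, R)) else 0)"
    by (simp only: sum.cartesian_product split_def prod.collapse)
  also have "\<dots> = (\<Sum>u<2 ^ length qs. f u (?j (u, snd (split_index qs a))))"
    using bij_betw_apply[OF split_index_bij[OF qs], of a] a by auto
  finally show ?thesis .
qed

lemma sum_unitm:
  fixes W :: "nat \<Rightarrow> nat \<Rightarrow> complex"
  assumes "i < n" "j < n"
  shows "(\<Sum>i'<n. \<Sum>j'<n. unitm i j i' j' * W i' j') = W i j"
proof -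
  have "(\<Sum>j'<n. unitm i j i' j' * W i' j') = (if i' = i then W i j else 0)" for i'
  proof -
    have "(\<Sum>j'<n. unitm i j i' j' * W i' j') = (\<Sum>j'<n. if j' = j then (if i' = i then W i j else 0) else 0)"
      by (intro sum.cong refl) (auto simp: unitm_def)
    then show ?thesis using assms by simp
  qed
  then show ?thesis using assms by simp
qed

lemma lift_eq_weighted_sum:
  "lift N qs E X a b = (if a < 2 ^ N \<and> b < 2 ^ N then
     (\<Sum>i<2 ^ N. \<Sum>j<2 ^ N. X i j * (if agree_off N qs i a \<and> agree_off N qs j b
        then E (unitm (sub_idx qs i) (sub_idx qs j)) (sub_idx qs a) (sub_idx qs b) else 0))
     else 0)"
  unfolding lift_def by (simp add: if_distrib[where f = "\<lambda>x. _ * x"] cong: if_cong)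

lemma lift_unitm:
  assumes "i < 2 ^ N" "j < 2 ^ N"
  shows "lift N qs E (unitm i j) a b =
    (if a < 2 ^ N \<and> b < 2 ^ N \<and> agree_off N qs i a \<and> agree_off N qs j b
     then E (unitm (sub_idx qs i) (sub_idx qs j)) (sub_idx qs a) (sub_idx qs b) else 0)"
  unfolding lift_eq_weighted_sum sum_unitm[OF assms] by simp

lemma lift_linear:
  "lift N qs E (\<lambda>i j. c * A i j + B i j) = (\<lambda>i j. c * lift N qs E A i j + lift N qs E B i j)"
  unfolding lift_eq_weighted_sum
  by (intro ext) (simp add: algebra_simps sum.distrib sum_distrib_left)

lemma lift_madd:
  "lift N qs (\<lambda>\<rho>. madd (E \<rho>) (F \<rho>)) X = madd (lift N qs E X) (lift N qs F X)"
proof -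
  have "(if P then x * (y + z) else 0) = (if P then x * y else 0) + (if P then x * z else 0)"
    for P and x y z :: complex
    by (simp add: distrib_left)
  then show ?thesis unfolding lift_def madd_def by (intro ext) (simp add: sum.distrib)
qed

lemma ampl_prod_lift:
  assumes qs: "distinct qs" "set qs \<subseteq> {..<N}" and "a < 2 ^ N" "b < 2 ^ N"
  defines "split \<equiv> \<lambda>(a, j). (sub_idx qs a, snd (split_index qs a), j)"
    and "join \<equiv> \<lambda>(u, R, j). (join_index N qs (u, R), j)"
  shows "ampl_prod (2 ^ N) (lift N qs E) X (a, ja) (b, jb)
       = ampl_prod (2 ^ length qs) E (\<lambda>z w. X (join z) (join w)) (split (a, ja)) (split (b, jb))"
proof -
  have "ampl_prod (2 ^ N) (lift N qs E) X (a, ja) (b, jb)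
     = (\<Sum>i<2 ^ N. if agree_off N qs i a then (\<Sum>j<2 ^ N. if agree_off N qs j b then
          X (i, ja) (j, jb) * E (unitm (sub_idx qs i) (sub_idx qs j)) (sub_idx qs a) (sub_idx qs b)
          else 0) else 0)"
    unfolding ampl_prod_def using assms by (auto simp: lift_unitm intro!: sum.cong)
  also have "\<dots> = (\<Sum>i<2 ^ N. if agree_off N qs i a then (\<Sum>w<2 ^ length qs.
       X (i, ja) (join_index N qs (w, snd (split_index qs b)), jb)
       * E (unitm (sub_idx qs i) w) (sub_idx qs a) (sub_idx qs b)) else 0)"
    by (intro sum.cong refl if_cong sum_agree_off[OF qs \<open>b < 2 ^ N\<close>])
  also have "\<dots> = (\<Sum>u<2 ^ length qs. \<Sum>w<2 ^ length qs.
       X (join_index N qs (u, snd (split_index qs a)), ja) (join_index N qs (w, snd (split_index qs b)), jb)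
       * E (unitm u w) (sub_idx qs a) (sub_idx qs b))"
    by (rule sum_agree_off[OF qs \<open>a < 2 ^ N\<close>])
  also have "\<dots> = ampl_prod (2 ^ length qs) E (\<lambda>z w. X (join z) (join w)) (split (a, ja)) (split (b, jb))"
    unfolding ampl_prod_def split_def join_def by simp
  finally show ?thesis .
qed

lemma completely_positive_lift:
  assumes qs: "distinct qs" "set qs \<subseteq> {..<N}" and E: "completely_positive (2 ^ length qs) E"
  shows "completely_positive (2 ^ N) (lift N qs E)"
proof -
  let ?S = "{..<(2 :: nat) ^ length qs}" and ?P = "Pow ({..<N} - set qs)"
  define split where "split = (\<lambda>(a :: nat, j :: nat). (sub_idx qs a, snd (split_index qs a), j))"
  define join where "join = (\<lambda>(u, R, j :: nat). (join_index N qs (u, R), j))"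
  have "cp_prod (2 ^ N) (lift N qs E)"
  proof (rule cp_prodI)
    fix J :: "nat set" and X assume J: "finite J" and X: "psd_on ({..<(2 :: nat) ^ N} \<times> J) X"
    have split_join: "\<forall>z\<in>?S \<times> (?P \<times> J). split (join z) = z"
      using split_join_index[OF qs] by (auto simp: split_def join_def split_index_def prod_eq_iff)
    have join_split: "\<forall>x\<in>{..<2 ^ N} \<times> J. join (split x) = x"
      using join_split_index[OF qs] by (auto simp: split_def join_def split_index_def)
    have join_into: "join ` (?S \<times> (?P \<times> J)) \<subseteq> {..<2 ^ N} \<times> J"
      using bij_betw_apply[OF join_index_bij[OF qs]] by (auto simp: join_def)
    have split_into: "split ` ({..<2 ^ N} \<times> J) \<subseteq> ?S \<times> (?P \<times> J)"
      using bij_betw_apply[OF split_index_bij[OF qs]] by (auto simp: split_def split_index_def)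
    have "psd_on (?S \<times> (?P \<times> J)) (\<lambda>z w. X (join z) (join w))"
      by (rule psd_on_reindex[OF bij_betw_byWitness[OF split_join join_split join_into split_into] X]) simp
    then have "psd_on (?S \<times> (?P \<times> J)) (ampl_prod (2 ^ length qs) E (\<lambda>z w. X (join z) (join w)))"
      using E J by (intro cp_prod_ancilla) (simp_all add: completely_positive_iff_cp_prod)
    then show "psd_on ({..<2 ^ N} \<times> J) (ampl_prod (2 ^ N) (lift N qs E) X)"
      by (rule psd_on_reindex[OF bij_betw_byWitness[OF join_split split_join split_into join_into]])
        (auto simp: ampl_prod_lift[OF qs] split_def join_def)
  qed
  moreover have "linear_on (2 ^ N) (lift N qs E)"
    by (simp add: linear_on_def lift_linear)
  moreover have "is_mat (2 ^ N) (lift N qs E A)" for A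
    by (simp add: is_mat_def lift_def)
  ultimately show ?thesis by (simp add: completely_positive_iff_cp_prod)
qed

lemma trace_lift_unitm:
  assumes qs: "distinct qs" "set qs \<subseteq> {..<N}" and E: "trace_preserving (2 ^ length qs) E"
    and k: "k < 2 ^ N" and l: "l < 2 ^ N"
  shows "(\<Sum>a<2 ^ N. lift N qs E (unitm k l) a a) = (if k = l then 1 else 0)"
proof (cases "agree_off N qs k l")
  case True
  let ?U = "E (unitm (sub_idx qs k) (sub_idx qs l))"
  have "(\<Sum>a<2 ^ N. lift N qs E (unitm k l) a a)
      = (\<Sum>a<2 ^ N. if agree_off N qs a k then (\<lambda>u _. ?U u u) (sub_idx qs a) a else 0)"
    using True by (intro sum.cong refl) (auto simp: lift_unitm[OF k l] agree_off_def)
  also have "\<dots> = (\<Sum>u<2 ^ length qs. ?U u u)"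
    by (rule sum_agree_off[OF qs k])
  also have "\<dots> = mtrace (2 ^ length qs) (unitm (sub_idx qs k) (sub_idx qs l))"
    using E is_mat_unitm[OF sub_idx_less sub_idx_less]
    unfolding trace_preserving_def mtrace_def by blast
  also have "\<dots> = (if sub_idx qs k = sub_idx qs l then 1 else 0)"
    using sub_idx_less[of qs k] by (auto simp: mtrace_def unitm_def intro!: sum.neutral)
  also have "\<dots> = (if k = l then 1 else 0)"
    using True inj_split_index[of qs] agree_off_iff[OF k l]
    by (auto simp: split_index_def inj_def)
  finally show ?thesis .
next
  case False
  then have "\<not> (agree_off N qs k a \<and> agree_off N qs l a)" for a
    by (auto simp: agree_off_def)
  moreover have "k \<noteq> l" using False by (auto simp: agree_off_def)
  ultimately show ?thesis by (auto simp: lift_unitm[OF k l] intro!: sum.neutral)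
qed

lemma trace_preserving_lift:
  assumes qs: "distinct qs" "set qs \<subseteq> {..<N}" and E: "trace_preserving (2 ^ length qs) E"
  shows "trace_preserving (2 ^ N) (lift N qs E)"
  unfolding trace_preserving_def
proof (intro allI impI)
  fix A assume A: "is_mat (2 ^ N) A"
  have lin: "linear_on (2 ^ N) (lift N qs E)" by (simp add: linear_on_def lift_linear)
  have "mtrace (2 ^ N) (lift N qs E A)
      = (\<Sum>a<2 ^ N. \<Sum>k<2 ^ N. \<Sum>l<2 ^ N. A k l * lift N qs E (unitm k l) a a)"
    unfolding mtrace_def linear_on_expand[OF lin A] ..
  also have "\<dots> = (\<Sum>k<2 ^ N. \<Sum>a<2 ^ N. \<Sum>l<2 ^ N. A k l * lift N qs E (unitm k l) a a)"
    by (rule sum.swap)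
  also have "\<dots> = (\<Sum>k<2 ^ N. \<Sum>l<2 ^ N. A k l * (\<Sum>a<2 ^ N. lift N qs E (unitm k l) a a))"
    unfolding sum_distrib_left by (intro sum.cong refl sum.swap)
  also have "\<dots> = (\<Sum>k<2 ^ N. \<Sum>l<2 ^ N. if l = k then A k l else 0)"
    by (intro sum.cong refl) (simp add: trace_lift_unitm[OF qs E])
  also have "\<dots> = mtrace (2 ^ N) A" by (simp add: mtrace_def)
  finally show "mtrace (2 ^ N) (lift N qs E A) = mtrace (2 ^ N) A" .
qed

section \<open>Transitions\<close>

definition msandwich :: "nat \<Rightarrow> cmat \<Rightarrow> cmat \<Rightarrow> cmat" where
  "msandwich d K \<rho> = mmul d (mmul d K \<rho>) (adj K)"

lemma msandwich_unitm:
  assumes "i < d" "j < d"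
  shows "msandwich d K (unitm i j) a b = (if a < d \<and> b < d then K a i * cnj (K b j) else 0)"
proof (cases "a < d \<and> b < d")
  case True
  have col: "mmul d K (unitm i j) a l = (if l = j then K a i else 0)" if "l < d" for l
    using True that assms
    by (cases "l = j") (simp_all add: mmul_def unitm_def if_distrib[where f = "\<lambda>x. _ * x"] cong: if_cong)
  have "msandwich d K (unitm i j) a b = (\<Sum>l<d. (if l = j then K a i else 0) * cnj (K b l))"
    using True by (simp add: msandwich_def mmul_def[of d "mmul d K (unitm i j)"] adj_def col)
  then show ?thesis
    using True assms by (simp add: if_distrib[where f = "\<lambda>x. x * _"] cong: if_cong)
qed (auto simp: msandwich_def mmul_def)

lemma ampl_prod_msandwich:
  fixes K :: cmat and J :: "'j set"
  defines "M \<equiv> \<lambda>x u :: nat \<times> 'j. if snd x = snd u then K (fst x) (fst u) else 0"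
  assumes J: "finite J" and x: "x \<in> {..<d} \<times> J" and y: "y \<in> {..<d} \<times> J"
  shows "ampl_prod d (msandwich d K) X x y
       = (\<Sum>u\<in>{..<d} \<times> J. \<Sum>w\<in>{..<d} \<times> J. M x u * X u w * cnj (M y w))"
proof -
  let ?A = "{..<d} \<times> J"
  have delta: "(\<Sum>u\<in>?A. (if j = snd u then c (fst u) else 0) * g u) = (\<Sum>i<d. c i * g (i, j))"
    if "j \<in> J" for j and c :: "nat \<Rightarrow> complex" and g
  proof -
    have "(\<Sum>u\<in>?A. (if j = snd u then c (fst u) else 0) * g u)
        = (\<Sum>i<d. \<Sum>j'\<in>J. if j = j' then c i * g (i, j') else 0)"
      by (simp add: sum.cartesian_product split_def if_distrib[where f = "\<lambda>x. x * _"] cong: if_cong)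
    then show ?thesis using J that by simp
  qed
  obtain a ja b jb where xy: "x = (a, ja)" "y = (b, jb)" "a < d" "b < d" "ja \<in> J" "jb \<in> J"
    using x y by auto
  have "(\<Sum>u\<in>?A. \<Sum>w\<in>?A. M x u * X u w * cnj (M y w))
      = (\<Sum>u\<in>?A. (if ja = snd u then K a (fst u) else 0)
          * (\<Sum>w\<in>?A. (if jb = snd w then cnj (K b (fst w)) else 0) * X u w))"
    unfolding M_def xy by (simp add: sum_distrib_left mult_ac if_distrib[where f = cnj] cong: if_cong)
  also have "\<dots> = (\<Sum>i<d. K a i
      * (\<Sum>w\<in>?A. (if jb = snd w then cnj (K b (fst w)) else 0) * X (i, ja) w))"
    by (rule delta[OF \<open>ja \<in> J\<close>])
  also have "\<dots> = (\<Sum>i<d. K a i * (\<Sum>j<d. cnj (K b j) * X (i, ja) (j, jb)))"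
    by (intro sum.cong refl arg_cong2[where f = times] delta[OF \<open>jb \<in> J\<close>])
  also have "\<dots> = ampl_prod d (msandwich d K) X x y"
    using xy by (simp add: ampl_prod_def msandwich_unitm sum_distrib_left mult_ac)
  finally show ?thesis ..
qed

lemma completely_positive_msandwich:
  assumes d: "0 < d"
  shows "completely_positive d (msandwich d K)"
proof -
  have "cp_prod d (msandwich d K)"
  proof (rule cp_prodI)
    fix J :: "nat set" and X assume J: "finite J" and X: "psd_on ({..<d} \<times> J) X"
    let ?M = "\<lambda>x u :: nat \<times> nat. if snd x = snd u then K (fst x) (fst u) else 0"
    have "psd_on ({..<d} \<times> J) (\<lambda>x y. \<Sum>u\<in>{..<d} \<times> J. \<Sum>w\<in>{..<d} \<times> J. ?M x u * X u w * cnj (?M y w))"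
      using J X by (intro psd_on_congruence) simp_all
    then show "psd_on ({..<d} \<times> J) (ampl_prod d (msandwich d K) X)"
      by (subst psd_on_cong[where Y = "\<lambda>x y. \<Sum>u\<in>{..<d} \<times> J. \<Sum>w\<in>{..<d} \<times> J. ?M x u * X u w * cnj (?M y w)"])
        (simp_all add: ampl_prod_msandwich[OF J])
  qed
  moreover have "linear_on d (msandwich d K)"
    unfolding linear_on_def msandwich_def mmul_def
    by (simp add: fun_eq_iff algebra_simps sum.distrib sum_distrib_left)
  ultimately show ?thesis
    by (simp add: completely_positive_iff_cp_prod[OF d] msandwich_def is_mat_def mmul_def)
qed

lemma trace_preserving_msandwich:
  assumes "unitary d U"
  shows "trace_preserving d (msandwich d U)"
  unfolding trace_preserving_def
proof (intro allI impI)
  fix X assume "is_mat d X"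
  have orth: "(\<Sum>a<d. cnj (U a l) * U a k) = (if l = k then 1 else 0)" if "l < d" "k < d" for l k
    using assms that fun_cong[OF fun_cong[OF conjunct2[OF assms[unfolded unitary_def]]], of l k]
    by (simp add: mmul_def adj_def idm_def)
  have "mtrace d (msandwich d U X) = (\<Sum>a<d. \<Sum>l<d. \<Sum>k<d. U a k * X k l * cnj (U a l))"
    by (simp add: mtrace_def msandwich_def mmul_def[of d "mmul d U X"] mmul_def adj_def
        sum_distrib_right)
  also have "\<dots> = (\<Sum>a<d. \<Sum>k<d. \<Sum>l<d. U a k * X k l * cnj (U a l))"
    by (intro sum.cong refl sum.swap)
  also have "\<dots> = (\<Sum>k<d. \<Sum>a<d. \<Sum>l<d. U a k * X k l * cnj (U a l))"
    by (rule sum.swap)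
  also have "\<dots> = (\<Sum>k<d. \<Sum>l<d. \<Sum>a<d. U a k * X k l * cnj (U a l))"
    by (intro sum.cong refl sum.swap)
  also have "\<dots> = (\<Sum>k<d. \<Sum>l<d. X k l * (\<Sum>a<d. cnj (U a l) * U a k))"
    by (simp add: sum_distrib_left mult_ac)
  also have "\<dots> = (\<Sum>k<d. \<Sum>l<d. if l = k then X k l else 0)"
    by (intro sum.cong refl) (simp add: orth)
  also have "\<dots> = mtrace d X" by (simp add: mtrace_def)
  finally show "mtrace d (msandwich d U X) = mtrace d X" .
qed

lemma sandwich_emb_eq_lift: "sandwich N (emb N qs A) = lift N qs (msandwich (2 ^ length qs) A)"
proof (intro ext)
  fix X a b
  let ?n = "(2 :: nat) ^ N"
  show "sandwich N (emb N qs A) X a b = lift N qs (msandwich (2 ^ length qs) A) X a b"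
  proof (cases "a < ?n \<and> b < ?n")
    case True
    have "sandwich N (emb N qs A) X a b
        = (\<Sum>k<?n. \<Sum>l<?n. emb N qs A a k * X k l * cnj (emb N qs A b l))"
      using True by (subst sum.swap)
        (simp add: sandwich_def mmul_def[of ?n "mmul ?n (emb N qs A) X"] mmul_def adj_def
          sum_distrib_right)
    also have "\<dots> = (\<Sum>i<?n. \<Sum>j<?n. if agree_off N qs i a \<and> agree_off N qs j b
        then X i j * msandwich (2 ^ length qs) A (unitm (sub_idx qs i) (sub_idx qs j))
          (sub_idx qs a) (sub_idx qs b) else 0)"
      using True sub_idx_less[of qs]
      by (intro sum.cong refl) (auto simp: emb_def msandwich_unitm agree_off_def)
    also have "\<dots> = lift N qs (msandwich (2 ^ length qs) A) X a b"
      using True by (simp add: lift_def)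
    finally show ?thesis .
  qed (auto simp: sandwich_def lift_def mmul_def)
qed

lemma init_map_eq_lift:
  "init_map N q = lift N [q] (\<lambda>\<rho>. madd (msandwich 2 (unitm 0 0) \<rho>) (msandwich 2 (unitm 0 1) \<rho>))"
  by (rule ext) (simp add: init_map_def ket_bra_def sandwich_emb_eq_lift lift_madd)

lemma meas_map_eq_lift: "meas_map N q c = lift N [q] (msandwich 2 (unitm c c))"
  by (rule ext) (simp add: meas_map_def ket_bra_def sandwich_emb_eq_lift)

lemma trace_preserving_init_qubit:
  "trace_preserving 2 (\<lambda>\<rho>. madd (msandwich 2 (unitm 0 0) \<rho>) (msandwich 2 (unitm 0 1) \<rho>))"
  by (simp add: trace_preserving_def mtrace_def madd_def msandwich_def mmul_def adj_def unitm_def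
      numeral_2_eq_2)

lemma trace_preserving_measure_qubit:
  "trace_preserving 2 (\<lambda>\<rho>. madd (msandwich 2 (unitm 0 0) \<rho>) (msandwich 2 (unitm 1 1) \<rho>))"
  by (simp add: trace_preserving_def mtrace_def madd_def msandwich_def mmul_def adj_def unitm_def
      numeral_2_eq_2)

lemma local_cp_imp_completely_positive:
  "local_cp N qs E \<Longrightarrow> distinct qs \<Longrightarrow> set qs \<subseteq> {..<N} \<Longrightarrow> completely_positive (2 ^ N) E"
  unfolding local_cp_def using completely_positive_lift by blast

lemma local_cptp_imp_cptp:
  assumes "local_cptp N qs E" "distinct qs" "set qs \<subseteq> {..<N}"
  shows "completely_positive (2 ^ N) E \<and> trace_preserving (2 ^ N) E"
  using assms completely_positive_lift trace_preserving_lift unfolding local_cptp_def by blast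

text \<open>Well-formedness of the programs reachable from a well-formed program, which may contain the
  terminated program \<open>Skip\<close> (e.g. in the unfolding of \<open>Repeat\<close>).\<close>

fun wf_cmd :: "nat \<Rightarrow> ('x, 'v) prog \<Rightarrow> bool" where
  "wf_cmd N Skip = True"
| "wf_cmd N (Seq S1 S2) = (wf_cmd N S1 \<and> wf_cmd N S2)"
| "wf_cmd N (Init q) = (q < N)"
| "wf_cmd N (Unit U qs) = (distinct qs \<and> (\<forall>q\<in>set qs. q < N) \<and> unitary (2 ^ length qs) U)"
| "wf_cmd N (Meas x q) = (q < N)"
| "wf_cmd N (Assign x e) = True"
| "wf_cmd N (If b S1 S2) = (wf_cmd N S1 \<and> wf_cmd N S2)"
| "wf_cmd N (Fn y f x) = True"
| "wf_cmd N (Repeat S b) = wf_cmd N S"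

lemma wf_prog_imp_wf_cmd: "wf_prog N S \<Longrightarrow> wf_cmd N S"
  by (induction S) auto

lemma wf_cmd_seq: "wf_cmd N S1 \<Longrightarrow> wf_cmd N S2 \<Longrightarrow> wf_cmd N (seq S1 S2)"
  unfolding seq_def by auto

lemma step_cptp:
  assumes "step N S \<sigma> fl F S' \<sigma>'" "wf_cmd N S"
  shows "completely_positive (2 ^ N) F \<and> trace_preserving (2 ^ N) F \<and> wf_cmd N S'"
  using assms
proof (induction rule: step.induct)
  case (IN q \<sigma>)
  then show ?case
    using completely_positive_lift[of "[q]" N] trace_preserving_lift[of "[q]" N]
      completely_positive_add[OF _ completely_positive_msandwich completely_positive_msandwich]
      trace_preserving_init_qubit
    by (simp add: init_map_eq_lift)
next
  case (UT U qs \<sigma>)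
  then have "distinct qs" "set qs \<subseteq> {..<N}" "unitary (2 ^ length qs) U" by auto
  then show ?case
    using completely_positive_lift completely_positive_msandwich
      trace_preserving_lift trace_preserving_msandwich
    by (simp add: sandwich_emb_eq_lift)
next
  case (F_IN q E \<sigma>)
  then show ?case using local_cptp_imp_cptp[of N "[q]"] by simp
next
  case (F_UT qs E U \<sigma>)
  then show ?case using local_cptp_imp_cptp[of N qs] by auto
next
  case (SC S1 \<sigma> fl F S1' \<sigma>' S2)
  then show ?case using wf_cmd_seq by auto
qed (auto simp: completely_positive_id trace_preserving_def)

lemma mstep_cptp:
  assumes "mstep N S \<sigma> fl F0 S0' \<sigma>0 F1 S1' \<sigma>1" "wf_cmd N S"
  shows "completely_positive (2 ^ N) F0 \<and> completely_positive (2 ^ N) F1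
    \<and> trace_preserving (2 ^ N) (\<lambda>\<rho>. madd (F0 \<rho>) (F1 \<rho>)) \<and> wf_cmd N S0' \<and> wf_cmd N S1'"
  using assms
proof (induction rule: mstep.induct)
  case (M x q \<sigma>)
  have "(\<lambda>\<rho>. madd (meas_map N q 0 \<rho>) (meas_map N q 1 \<rho>))
      = lift N [q] (\<lambda>\<rho>. madd (msandwich 2 (unitm 0 0) \<rho>) (msandwich 2 (unitm 1 1) \<rho>))"
    by (rule ext) (simp add: meas_map_eq_lift lift_madd)
  then show ?case
    using M completely_positive_lift[of "[q]" N] trace_preserving_lift[of "[q]" N]
      completely_positive_msandwich trace_preserving_measure_qubit
    by (simp add: meas_map_eq_lift)
next
  case (F_M q E0 E1 x \<sigma>)
  then show ?case using local_cp_imp_completely_positive[of N "[q]"] by simp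
next
  case (SC S1 \<sigma> fl F0 S0' \<sigma>0 F1 S1' \<sigma>1 S2)
  then show ?case using wf_cmd_seq by auto
qed

section \<open>Transition trees\<close>

lemma fault_tree_root: "fault_tree N r S0 \<sigma>0 T \<Longrightarrow> T [] = Some (S0, \<sigma>0, id, False)"
  unfolding fault_tree_def by blast

lemma fault_tree_parent: "fault_tree N r S0 \<sigma>0 T \<Longrightarrow> T (p @ [c]) \<noteq> None \<Longrightarrow> T p \<noteq> None"
  unfolding fault_tree_def by blast

lemma fault_tree_children:
  assumes "fault_tree N r S0 \<sigma>0 T" "T p = Some (S, \<sigma>, \<Phi>, fl)"
  obtains (leaf) "S = Skip" "T (p @ [False]) = None" "T (p @ [True]) = None"
  | (measurement) f F0 S0' \<sigma>0' F1 S1' \<sigma>1' where "S \<noteq> Skip" "mstep N S \<sigma> f F0 S0' \<sigma>0' F1 S1' \<sigma>1'"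
      "T (p @ [False]) = Some (S0', \<sigma>0', F0 \<circ> \<Phi>, f)" "T (p @ [True]) = Some (S1', \<sigma>1', F1 \<circ> \<Phi>, f)"
  | (transition) f F S' \<sigma>' where "S \<noteq> Skip" "step N S \<sigma> f F S' \<sigma>'"
      "T (p @ [False]) = Some (S', \<sigma>', F \<circ> \<Phi>, f)" "T (p @ [True]) = None"
proof -
  note node = assms(1)[unfolded fault_tree_def, THEN conjunct2, THEN conjunct2, THEN conjunct1,
      rule_format, OF assms(2)]
  show ?thesis
  proof (cases "S = Skip")
    case True
    then show ?thesis using node leaf by blast
  next
    case False
    show ?thesis
    proof (cases "meas_head S")
      case True
      then show ?thesis using node measurement[OF False] by blast
    next
      case nonmeas: False
      then show ?thesis using node transition[OF False] False by blast
    qed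
  qed
qed

lemma fault_tree_node_wf_cp:
  assumes T: "fault_tree N r S0 \<sigma>0 T" and S0: "wf_prog N S0"
  shows "T p = Some (S, \<sigma>, \<Phi>, fl) \<Longrightarrow> wf_cmd N S \<and> completely_positive (2 ^ N) \<Phi>"
proof (induction p arbitrary: S \<sigma> \<Phi> fl rule: rev_induct)
  case Nil
  then have "S = S0" "\<Phi> = id" using fault_tree_root[OF T] by auto
  then show ?case using wf_prog_imp_wf_cmd[OF S0] completely_positive_id[of "2 ^ N"] by (simp add: id_def)
next
  case (snoc c p)
  obtain S' \<sigma>' \<Phi>' fl' where T': "T p = Some (S', \<sigma>', \<Phi>', fl')"
    using fault_tree_parent[OF T, of p c] snoc.prems by fastforce
  have wf': "wf_cmd N S'" and cp': "completely_positive (2 ^ N) \<Phi>'"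
    using snoc.IH[OF T'] by auto
  have comp: "completely_positive (2 ^ N) F \<Longrightarrow> completely_positive (2 ^ N) (F \<circ> \<Phi>')" for F
    using completely_positive_comp[OF _ _ cp'] by simp
  from T T' show ?case
  proof (cases rule: fault_tree_children)
    case leaf
    then show ?thesis using snoc.prems by (cases c) auto
  next
    case (measurement f F0 S0' \<sigma>0' F1 S1' \<sigma>1')
    have children: "wf_cmd N S0' \<and> completely_positive (2 ^ N) (F0 \<circ> \<Phi>')"
      "wf_cmd N S1' \<and> completely_positive (2 ^ N) (F1 \<circ> \<Phi>')"
      using mstep_cptp[OF measurement(2) wf'] comp by auto
    show ?thesis
    proof (cases c)
      case True
      then have "S = S1'" "\<Phi> = F1 \<circ> \<Phi>'" using snoc.prems measurement by auto
      then show ?thesis using children(2) by (simp only:)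
    next
      case False
      then have "S = S0'" "\<Phi> = F0 \<circ> \<Phi>'" using snoc.prems measurement by auto
      then show ?thesis using children(1) by (simp only:)
    qed
  next
    case (transition f F S'' \<sigma>'')
    then have "S = S''" "\<Phi> = F \<circ> \<Phi>'"
      using snoc.prems by (cases c; auto)+
    then show ?thesis
      using step_cptp[OF transition(2) wf'] comp by (simp only:)
  qed
qed

lemma completely_positive_node_state:
  assumes "fault_tree N r S0 \<sigma>0 T" "wf_prog N S0"
  shows "completely_positive (2 ^ N) (node_state T p)"
proof (cases "T p")
  case None
  then have "node_state T p = (\<lambda>_ _ _. 0)" by (simp add: node_state_def fun_eq_iff)
  then show ?thesis using completely_positive_zero by simp
next
  case (Some a)
  then obtain S \<sigma> \<Phi> fl where Tp: "T p = Some (S, \<sigma>, \<Phi>, fl)" by (cases a) auto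
  then have "node_state T p = \<Phi>" by (intro ext) (simp add: node_state_def)
  then show ?thesis using fault_tree_node_wf_cp[OF assms Tp] by simp
qed

lemma mtrace_madd: "mtrace n (madd A B) = mtrace n A + mtrace n B"
  unfolding mtrace_def madd_def by (simp add: sum.distrib)

lemma trace_children:
  assumes T: "fault_tree N r S0 \<sigma>0 T" and S0: "wf_prog N S0" and \<rho>: "is_mat (2 ^ N) \<rho>"
  shows "mtrace (2 ^ N) (node_state T (p @ [False]) \<rho>) + mtrace (2 ^ N) (node_state T (p @ [True]) \<rho>)
       = (if p \<in> leaves T then 0 else mtrace (2 ^ N) (node_state T p \<rho>))"
proof (cases "T p")
  case None
  then have "T (p @ [c]) = None" for c using fault_tree_parent[OF T] by blast
  with None show ?thesis by (simp add: node_state_def mtrace_def leaves_def)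
next
  case (Some a)
  then obtain S \<sigma> \<Phi> fl where Tp: "T p = Some (S, \<sigma>, \<Phi>, fl)" by (cases a) auto
  then have wf: "wf_cmd N S" and "is_mat (2 ^ N) (\<Phi> \<rho>)"
    using fault_tree_node_wf_cp[OF T S0] \<rho> by (auto simp: completely_positive_def)
  from T Tp show ?thesis
  proof (cases rule: fault_tree_children)
    case leaf
    then show ?thesis using Tp by (simp add: node_state_def mtrace_def leaves_def)
  next
    case (measurement f F0 S0' \<sigma>0' F1 S1' \<sigma>1')
    then show ?thesis
      using Tp \<open>is_mat (2 ^ N) (\<Phi> \<rho>)\<close> mstep_cptp[OF _ wf]
      by (auto simp: node_state_def leaves_def trace_preserving_def mtrace_madd)
  next
    case (transition f F S' \<sigma>')
    then show ?thesis
      using Tp \<open>is_mat (2 ^ N) (\<Phi> \<rho>)\<close> step_cptp[OF _ wf]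
      by (auto simp: node_state_def leaves_def trace_preserving_def mtrace_def)
  qed
qed

lemma finite_bool_lists_shorter: "finite {p :: bool list. length p < n}"
  by (rule finite_subset[OF _ finite_lists_length_le[of "UNIV :: bool set" n]]) auto

lemma finite_bool_lists_length: "finite {p :: bool list. length p = n}"
  by (rule finite_subset[OF _ finite_bool_lists_shorter[of "Suc n"]]) auto

lemma sum_bool_lists_Suc:
  "(\<Sum>p\<in>{p :: bool list. length p = Suc n}. f p) = (\<Sum>p\<in>{p. length p = n}. f (p @ [False]) + f (p @ [True]))"
proof -
  let ?snoc = "\<lambda>z :: bool list \<times> bool. fst z @ [snd z]"
  have "{p :: bool list. length p = Suc n} = ?snoc ` ({p. length p = n} \<times> UNIV)"
  proof (intro equalityI subsetI)
    fix p :: "bool list" assume "p \<in> {p. length p = Suc n}"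
    then have "p = ?snoc (butlast p, last p)" "length (butlast p) = n"
      by (auto simp del: append_butlast_last_id intro!: append_butlast_last_id[symmetric])
    then show "p \<in> ?snoc ` ({p. length p = n} \<times> UNIV)" by blast
  qed auto
  moreover have "inj_on ?snoc ({p. length p = n} \<times> UNIV)"
    by (rule inj_onI) (auto simp: prod_eq_iff)
  ultimately have "(\<Sum>p\<in>{p :: bool list. length p = Suc n}. f p)
      = (\<Sum>z\<in>{p. length p = n} \<times> UNIV. f (fst z @ [snd z]))"
    by (simp add: sum.reindex)
  also have "\<dots> = (\<Sum>p\<in>{p. length p = n}. \<Sum>c\<in>UNIV. f (p @ [c]))"
    by (simp only: sum.cartesian_product split_def)
  finally show ?thesis by (simp add: UNIV_bool)
qed

lemma trace_levels:
  assumes T: "fault_tree N r S0 \<sigma>0 T" and S0: "wf_prog N S0" and \<rho>: "is_mat (2 ^ N) \<rho>"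
  defines "tr \<equiv> \<lambda>p. mtrace (2 ^ N) (node_state T p \<rho>)"
  shows "(\<Sum>p\<in>{p. length p = n}. tr p) + (\<Sum>p\<in>{p. length p < n}. if p \<in> leaves T then tr p else 0)
       = mtrace (2 ^ N) \<rho>"
proof (induction n)
  case 0
  have "{p :: bool list. length p = 0} = {[]}" by auto
  then show ?case using fault_tree_root[OF T] by (simp add: tr_def node_state_def)
next
  case (Suc n)
  have split: "{p :: bool list. length p < Suc n} = {p. length p = n} \<union> {p. length p < n}" by auto
  have leaves: "(\<Sum>p\<in>{p. length p < Suc n}. if p \<in> leaves T then tr p else 0)
      = (\<Sum>p\<in>{p. length p = n}. if p \<in> leaves T then tr p else 0)
        + (\<Sum>p\<in>{p. length p < n}. if p \<in> leaves T then tr p else 0)"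
    unfolding split
    by (subst sum.union_disjoint) (auto simp: finite_bool_lists_shorter finite_bool_lists_length)
  have level: "(\<Sum>p\<in>{p. length p = Suc n}. tr p) = (\<Sum>p\<in>{p. length p = n}. if p \<in> leaves T then 0 else tr p)"
    unfolding sum_bool_lists_Suc tr_def using trace_children[OF T S0 \<rho>] by simp
  have "(\<Sum>p\<in>{p. length p = n}. if p \<in> leaves T then 0 else tr p)
      + (\<Sum>p\<in>{p. length p = n}. if p \<in> leaves T then tr p else 0) = (\<Sum>p\<in>{p. length p = n}. tr p)"
    by (simp add: sum.distrib[symmetric] if_distrib cong: if_cong)
  then show ?case
    unfolding level leaves add.assoc[symmetric] by (simp add: Suc.IH)
qed

section \<open>Summable families of completely positive maps\<close>

lemma summable_on_sum:
  fixes f :: "'a \<Rightarrow> 'p \<Rightarrow> complex"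
  assumes "finite S" "\<And>x. x \<in> S \<Longrightarrow> f x summable_on A"
  shows "(\<lambda>p. \<Sum>x\<in>S. f x p) summable_on A"
  using assms by (induction S rule: finite_induct) (auto intro: summable_on_add)

lemma infsum_sum:
  fixes f :: "'a \<Rightarrow> 'p \<Rightarrow> complex"
  assumes "finite S" "\<And>x. x \<in> S \<Longrightarrow> f x summable_on A"
  shows "(\<Sum>\<^sub>\<infinity>p\<in>A. \<Sum>x\<in>S. f x p) = (\<Sum>x\<in>S. \<Sum>\<^sub>\<infinity>p\<in>A. f x p)"
  using assms
proof (induction S rule: finite_induct)
  case (insert x S)
  then show ?case by (simp add: infsum_add summable_on_sum)
qed simp

lemma psd_on_infsum:
  assumes A: "finite A" and psd: "\<And>p. p \<in> L \<Longrightarrow> psd_on A (Y p)"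
    and summable: "\<And>x y. (\<lambda>p. Y p x y) summable_on L"
  shows "psd_on A (\<lambda>x y. \<Sum>\<^sub>\<infinity>p\<in>L. Y p x y)"
  unfolding psd_on_def
proof
  fix v
  have terms: "(\<lambda>p. cnj (v x) * Y p x y * v y) summable_on L" for x y
    by (intro summable_on_cmult_left summable_on_cmult_right summable)
  have "(\<Sum>\<^sub>\<infinity>p\<in>L. cnj (v x) * Y p x y * v y) = cnj (v x) * (\<Sum>\<^sub>\<infinity>p\<in>L. Y p x y) * v y"
    for x y by (simp add: infsum_cmult_left infsum_cmult_right summable summable_on_cmult_right)
  then have "quad_form A (\<lambda>x y. \<Sum>\<^sub>\<infinity>p\<in>L. Y p x y) v
      = (\<Sum>x\<in>A. \<Sum>y\<in>A. \<Sum>\<^sub>\<infinity>p\<in>L. cnj (v x) * Y p x y * v y)"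
    unfolding quad_form_def by simp
  also have "\<dots> = (\<Sum>\<^sub>\<infinity>p\<in>L. quad_form A (Y p) v)"
    unfolding quad_form_def using A terms
    by (simp add: infsum_sum summable_on_sum)
  moreover have "(\<lambda>p. quad_form A (Y p) v) summable_on L"
    unfolding quad_form_def using A terms by (simp add: summable_on_sum)
  ultimately show "0 \<le> quad_form A (\<lambda>x y. \<Sum>\<^sub>\<infinity>p\<in>L. Y p x y) v"
    using psd unfolding psd_on_def by (simp add: infsum_nonneg_complex)
qed

definition infsum_map :: "'p set \<Rightarrow> ('p \<Rightarrow> cmat \<Rightarrow> cmat) \<Rightarrow> cmat \<Rightarrow> cmat" where
  "infsum_map L \<Phi> \<rho> = (\<lambda>i j. \<Sum>\<^sub>\<infinity>p\<in>L. \<Phi> p \<rho> i j)"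

definition trace_bounded :: "nat \<Rightarrow> 'p set \<Rightarrow> ('p \<Rightarrow> cmat \<Rightarrow> cmat) \<Rightarrow> bool" where
  "trace_bounded n L \<Phi> \<longleftrightarrow> (\<forall>\<rho> F. psd n \<rho> \<longrightarrow> finite F \<longrightarrow> F \<subseteq> L \<longrightarrow>
     (\<Sum>p\<in>F. Re (mtrace n (\<Phi> p \<rho>))) \<le> Re (mtrace n \<rho>))"

context
  fixes n :: nat and L :: "'p set" and \<Phi> :: "'p \<Rightarrow> cmat \<Rightarrow> cmat"
  assumes n: "0 < n" and cp: "\<And>p. completely_positive n (\<Phi> p)" and bounded: "trace_bounded n L \<Phi>"
begin

lemma summable_trace:
  assumes "psd n \<rho>"
  shows "(\<lambda>p. Re (mtrace n (\<Phi> p \<rho>))) summable_on L"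
proof (rule nonneg_bdd_above_summable_on)
  show "0 \<le> Re (mtrace n (\<Phi> p \<rho>))" for p
    using completely_positive_psd[OF n cp assms] by (rule psd_trace_nonneg)
  show "bdd_above (sum (\<lambda>p. Re (mtrace n (\<Phi> p \<rho>))) ` {F. F \<subseteq> L \<and> finite F})"
    using bounded assms unfolding trace_bounded_def by (intro bdd_aboveI2[of _ _ "Re (mtrace n \<rho>)"]) auto
qed

lemma summable_entry_psd:
  assumes "psd n \<rho>"
  shows "(\<lambda>p. \<Phi> p \<rho> i j) summable_on L"
proof -
  have psd: "psd n (\<Phi> p \<rho>)" for p by (rule completely_positive_psd[OF n cp assms])
  have "Infinite_Sum.abs_summable_on (\<lambda>p. 2 * Re (mtrace n (\<Phi> p \<rho>))) L"
    using summable_on_cmult_right[OF summable_trace[OF assms], of 2] psd_trace_nonneg[OF psd] by simp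
  then have "Infinite_Sum.abs_summable_on (\<lambda>p. \<Phi> p \<rho> i j) L"
    by (rule Infinite_Sum.abs_summable_on_comparison_test)
      (simp add: psd_norm_entry_le_trace[OF psd] psd_trace_nonneg[OF psd])
  then show ?thesis by (simp add: summable_on_iff_abs_summable_on_complex)
qed

text \<open>By polarization every matrix is a combination of rank-one positive matrices, so entrywise
  summability extends from positive arguments to all arguments.\<close>
lemma summable_entry:
  assumes "is_mat n \<rho>"
  shows "(\<lambda>p. \<Phi> p \<rho> i j) summable_on L"
proof -
  let ?w = "\<lambda>k l t x. (if x = k then 1 else 0) + \<i> ^ t * (if x = l then (1 :: complex) else 0)"
  have "\<Phi> p \<rho> i j
      = (\<Sum>k<n. \<Sum>l<n. \<rho> k l * (\<Sum>t<4. (\<i> ^ t / 4) * \<Phi> p (outer_product n (?w k l t)) i j))" for p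
  proof -
    have lin: "linear_on n (\<Phi> p)" using cp by (simp add: completely_positive_def)
    have "\<Phi> p (unitm k l) i j = (\<Sum>t<4. (\<i> ^ t / 4) * \<Phi> p (outer_product n (?w k l t)) i j)"
      if "k < n" "l < n" for k l
      unfolding unitm_polarization[OF that]
      by (subst linear_on_sum[OF lin]) (simp_all add: psd_outer_product[THEN psd_iff_psd_on[THEN iffD1]])
    then show ?thesis by (simp add: linear_on_expand[OF lin assms])
  qed
  then show ?thesis
    by (simp only:) (intro summable_on_sum summable_on_cmult_right summable_entry_psd
        psd_outer_product finite_lessThan)
qed

lemma summable_ampl_prod: "(\<lambda>p. ampl_prod n (\<Phi> p) X x y) summable_on L"
  unfolding ampl_prod_def
  by (intro summable_on_sum summable_on_cmult_right summable_entry is_mat_unitm) auto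

lemma ampl_prod_infsum_map:
  "ampl_prod n (infsum_map L \<Phi>) X x y = (\<Sum>\<^sub>\<infinity>p\<in>L. ampl_prod n (\<Phi> p) X x y)"
proof -
  have unit_summable: "(\<lambda>p. \<Phi> p (unitm k l) a b) summable_on L" if "k < n" "l < n" for k l a b
    by (rule summable_entry[OF is_mat_unitm[OF that]])
  have "ampl_prod n (infsum_map L \<Phi>) X x y = (\<Sum>i<n. \<Sum>j<n.
      \<Sum>\<^sub>\<infinity>p\<in>L. X (i, snd x) (j, snd y) * \<Phi> p (unitm i j) (fst x) (fst y))"
    unfolding ampl_prod_def infsum_map_def
    by (intro sum.cong refl) (simp add: infsum_cmult_right unit_summable)
  also have "\<dots> = (\<Sum>i<n. \<Sum>\<^sub>\<infinity>p\<in>L. \<Sum>j<n.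
      X (i, snd x) (j, snd y) * \<Phi> p (unitm i j) (fst x) (fst y))"
    by (intro sum.cong refl infsum_sum[symmetric] summable_on_cmult_right unit_summable) auto
  also have "\<dots> = (\<Sum>\<^sub>\<infinity>p\<in>L. ampl_prod n (\<Phi> p) X x y)"
    unfolding ampl_prod_def
    by (intro infsum_sum[symmetric] summable_on_sum summable_on_cmult_right unit_summable) auto
  finally show ?thesis .
qed

lemma completely_positive_infsum_map: "completely_positive n (infsum_map L \<Phi>)"
proof -
  have mat: "is_mat n (\<Phi> p A)" and lin: "linear_on n (\<Phi> p)" and "cp_prod n (\<Phi> p)"
    if "is_mat n A" for A p
    using cp that by (simp_all add: completely_positive_iff_cp_prod[OF n])
  have "linear_on n (infsum_map L \<Phi>)"
    unfolding linear_on_def infsum_map_def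
    using lin[unfolded linear_on_def]
    by (auto simp: fun_eq_iff infsum_add infsum_cmult_right summable_entry summable_on_cmult_right)
  moreover have "is_mat n (infsum_map L \<Phi> A)" if "is_mat n A" for A
    using mat[OF that] by (simp add: is_mat_def infsum_map_def)
  moreover have "cp_prod n (infsum_map L \<Phi>)"
  proof (rule cp_prodI)
    fix J :: "nat set" and X assume J: "finite J" and X: "psd_on ({..<n} \<times> J) X"
    have "psd_on ({..<n} \<times> J) (ampl_prod n (\<Phi> p) X)" for p
      using cp J X cp_prod_ancilla unfolding completely_positive_iff_cp_prod[OF n] by blast
    moreover have "ampl_prod n (infsum_map L \<Phi>) X = (\<lambda>x y. \<Sum>\<^sub>\<infinity>p\<in>L. ampl_prod n (\<Phi> p) X x y)"
      by (intro ext ampl_prod_infsum_map)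
    ultimately show "psd_on ({..<n} \<times> J) (ampl_prod n (infsum_map L \<Phi>) X)"
      using J by (simp add: psd_on_infsum summable_ampl_prod)
  qed
  ultimately show ?thesis by (simp add: completely_positive_iff_cp_prod[OF n])
qed

lemma trace_nonincreasing_infsum_map: "trace_nonincreasing n (infsum_map L \<Phi>)"
  unfolding trace_nonincreasing_def
proof (intro allI impI)
  fix \<rho> assume \<rho>: "psd n \<rho>"
  have summable: "(\<lambda>p. mtrace n (\<Phi> p \<rho>)) summable_on L"
    unfolding mtrace_def by (intro summable_on_sum summable_entry_psd[OF \<rho>]) auto
  have "mtrace n (infsum_map L \<Phi> \<rho>) = (\<Sum>\<^sub>\<infinity>p\<in>L. mtrace n (\<Phi> p \<rho>))"
    unfolding mtrace_def infsum_map_def by (rule infsum_sum[symmetric]) (auto intro: summable_entry_psd[OF \<rho>])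
  then have "Re (mtrace n (infsum_map L \<Phi> \<rho>)) = (\<Sum>\<^sub>\<infinity>p\<in>L. Re (mtrace n (\<Phi> p \<rho>)))"
    by (simp add: infsum_Re[OF summable])
  also have "\<dots> \<le> Re (mtrace n \<rho>)"
    using bounded \<rho> unfolding trace_bounded_def
    by (intro infsum_le_finite_sums[OF summable_trace[OF \<rho>]]) auto
  finally show "Re (mtrace n (infsum_map L \<Phi> \<rho>)) \<le> Re (mtrace n \<rho>)" .
qed

lemma quantum_channel_infsum_map: "quantum_channel n (infsum_map L \<Phi>)"
  by (simp add: quantum_channel_def completely_positive_infsum_map trace_nonincreasing_infsum_map)

end

lemma trace_bounded_leaves:
  assumes T: "fault_tree N r S0 \<sigma>0 T" and S0: "wf_prog N S0"
  shows "trace_bounded (2 ^ N) (leaves T) (node_state T)"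
  unfolding trace_bounded_def
proof (intro allI impI)
  fix \<rho> F assume \<rho>: "psd (2 ^ N) \<rho>" and F: "finite F" "F \<subseteq> leaves T"
  let ?tr = "\<lambda>p. Re (mtrace (2 ^ N) (node_state T p \<rho>))"
  have nonneg: "0 \<le> ?tr p" for p
    using completely_positive_psd[OF _ completely_positive_node_state[OF T S0] \<rho>] psd_trace_nonneg
    by simp
  obtain m where "F \<subseteq> {p. length p < m}"
    using finite_nat_set_iff_bounded[of "length ` F"] F(1) by auto
  then have "(\<Sum>p\<in>F. ?tr p) \<le> (\<Sum>p\<in>{p. length p < m}. if p \<in> leaves T then ?tr p else 0)"
    using F(2) nonneg
    by (subst sum.cong[OF refl, of F _ "\<lambda>p. if p \<in> leaves T then ?tr p else 0"])
      (auto intro!: sum_mono2 finite_bool_lists_shorter)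
  also have "\<dots> = Re (mtrace (2 ^ N) \<rho>) - (\<Sum>p\<in>{p. length p = m}. ?tr p)"
    using arg_cong[OF trace_levels[OF T S0, of \<rho> m], of Re] \<rho>
    by (simp add: psd_def if_distrib[where f = Re] cong: if_cong)
  also have "\<dots> \<le> Re (mtrace (2 ^ N) \<rho>)"
    using nonneg by (simp add: sum_nonneg)
  finally show "(\<Sum>p\<in>F. ?tr p) \<le> Re (mtrace (2 ^ N) \<rho>)" .
qed

theorem proposition1:
  fixes N r :: nat and S0 :: "('x, 'v::{zero,one}) prog" and \<sigma>0 :: "'x \<Rightarrow> 'v"
    and T :: "('x, 'v) tree"
  assumes "wf_prog N S0"
    and "fault_tree N r S0 \<sigma>0 T"
  shows "(\<forall>\<rho>. is_mat (2^N) \<rho> \<longrightarrow>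
            (\<forall>i j. (\<lambda>p. node_state T p \<rho> i j) summable_on leaves T))
         \<and> quantum_channel (2^N) (tree_map T)"
proof -
  have "0 < (2 :: nat) ^ N" by simp
  note infsum_facts = this completely_positive_node_state[OF assms(2,1)] trace_bounded_leaves[OF assms(2,1)]
  have "tree_map T = infsum_map (leaves T) (node_state T)"
    by (intro ext) (simp add: tree_map_def infsum_map_def)
  then show ?thesis
    using summable_entry[OF infsum_facts] quantum_channel_infsum_map[OF infsum_facts] by simp
qed

end
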